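(* Let $\overline{L}$, $D$, $K$, $\alpha(i)$ and $\beta(i)$ be as in the context. There exist $i_1$ and a constant $c_4>0$ such that for all $i\ge i_1$ and all $\mathbf{y}\in\mathbb{R}^{NM}$, $$\mathbf{y}^T\Big(\beta(i)\,\overline{L}\otimes I_M+\alpha(i)(I_N\otimes K)D\Big)\mathbf{y}\ \ge\ c_4\,\alpha(i)\,\|\mathbf{y}\|^2.$$
   Context: Objects: - $\overline{L}$ is the $N\times N$ mean of an i.i.d. sequence of random graph Laplacians on $N$ vertices, with $\lambda_2(\overline{L})>0$. - $\overline{H}_n\in\mathbb{R}^{M_n\times M}$ for $n=1,\dots,N$, with $G=\sum_n\overline{H}_n^T\overline{H}_n$ invertible. - $D=\mathrm{blockdiag}(\overline{H}_1^T\overline{H}_1,\dots,\overline{H}_N^T\overline{H}_N)$. - $K\in\mathbb{R}^{M\times M}$ is symmetric positive definite and commutes with $G$. Weight sequences: $\alpha(i)=a/(i+1)^{\tau_1}$ and $\beta(i)=b/(i+1)^{\tau_2}$, with $a,b>0$, $0<\tau_2\le\tau_1\le1$, and $\tau_1>\max(\tfrac12+\gamma_0,\tau_2+\gamma_0+\tfrac1{2+\varepsilon_1})$ for some $0\le\gamma_0<\tfrac12$ and $\varepsilon_1>0$. In particular $\tau_2<\tau_1$. *)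

theory Defs
  imports "Jordan_Normal_Form.Matrix" "Jordan_Normal_Form.Char_Poly"
    "HOL-Computational_Algebra.Polynomial" "HOL-Library.Multiset"
begin

(* Kronecker product A \<otimes> B (row/column index i corresponds to the pair (i div p, i mod p)) *)
definition kron :: "real mat \<Rightarrow> real mat \<Rightarrow> real mat" where
  "kron A B = mat (dim_row A * dim_row B) (dim_col A * dim_col B)
     (\<lambda>(i,j). A $$ (i div dim_row B, j div dim_col B) * B $$ (i mod dim_row B, j mod dim_col B))"

definition symmetric_mat :: "real mat \<Rightarrow> bool" where
  "symmetric_mat A \<longleftrightarrow> transpose_mat A = A"

definition pos_def_mat :: "nat \<Rightarrow> real mat \<Rightarrow> bool" where
  "pos_def_mat n A \<longleftrightarrow> A \<in> carrier_mat n n \<and> symmetric_mat A \<and>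
     (\<forall>x \<in> carrier_vec n. x \<noteq> 0\<^sub>v n \<longrightarrow> x \<bullet> (A *\<^sub>v x) > 0)"

definition graph_laplacian :: "nat \<Rightarrow> real mat \<Rightarrow> bool" where
  "graph_laplacian N L \<longleftrightarrow> L \<in> carrier_mat N N \<and> symmetric_mat L \<and>
     (\<forall>i<N. \<forall>j<N. i \<noteq> j \<longrightarrow> L $$ (i,j) \<le> 0) \<and>
     (\<forall>i<N. (\<Sum>j<N. L $$ (i,j)) = 0)"

definition gram_sum :: "nat \<Rightarrow> nat \<Rightarrow> (nat \<Rightarrow> real mat) \<Rightarrow> real mat" where
  "gram_sum N M H = foldr (\<lambda>n S. transpose_mat (H n) * H n + S) [0..<N] (0\<^sub>m M M)"

(* eigenvalues (with algebraic multiplicity) in increasing order;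
   for a symmetric real matrix all eigenvalues are real *)
definition eigvals_sorted :: "real mat \<Rightarrow> real list" where
  "eigvals_sorted A = sorted_list_of_multiset (proots (char_poly A))"

definition lambda2 :: "real mat \<Rightarrow> real" where
  "lambda2 A = eigvals_sorted A ! 1"

end

theory Submission
  imports Defs
begin

text \<open>Write \<open>y\<close> blockwise as \<open>Y\<^sub>1, \<dots>, Y\<^sub>N \<in> \<real>\<^sup>M\<close>. The form equals
  \<open>\<beta> \<Sum>\<^sub>m (Y\<^sub>\<bullet>\<^sub>m)\<^sup>T L Y\<^sub>\<bullet>\<^sub>m + \<alpha> \<Sum>\<^sub>n Y\<^sub>n\<^sup>T K H\<^sub>n\<^sup>T H\<^sub>n Y\<^sub>n\<close>. Split \<open>Y\<^sub>n = v + W\<^sub>n\<close> into the network average and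
  the disagreement. As \<open>\<lambda>\<^sub>2(L) > 0\<close>, the Laplacian sum is at least \<open>c\<^sub>L \<Sum>\<^sub>n |W\<^sub>n|\<^sup>2\<close>. As \<open>K\<close> and
  \<open>G = \<Sum>\<^sub>n H\<^sub>n\<^sup>T H\<^sub>n\<close> are positive definite and commute, \<open>K G\<close> is positive definite, so the local sum
  is at least \<open>\<kappa>/2 |v|\<^sup>2 - C \<Sum>\<^sub>n |W\<^sub>n|\<^sup>2\<close>. Finally \<open>\<beta>(i)/\<alpha>(i) = (b/a) (i+1)\<^bsup>\<tau>\<^sub>1-\<tau>\<^sub>2\<^esup>\<close> grows without
  bound, so for large \<open>i\<close> the Laplacian sum absorbs \<open>C\<close>, leaving a multiple of \<open>\<alpha>(i) |y|\<^sup>2\<close>.\<close>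

section \<open>Quadratic forms on index functions\<close>

lemma discriminant_le_of_nonneg:
  fixes a b c :: real
  assumes nonneg: "\<And>l. a + 2*l*b + l\<^sup>2*c \<ge> 0"
  shows "b\<^sup>2 \<le> a*c"
proof -
  have even: "a + l\<^sup>2*c \<ge> 0" for l
    using nonneg[of l] nonneg[of "-l"] by simp
  have "c \<ge> 0"
  proof (rule ccontr)
    assume "\<not> c \<ge> 0"
    define l where "l = (\<bar>a\<bar> + 1) / (-c) + 1"
    have l: "l \<ge> 1" "l * (-c) \<ge> \<bar>a\<bar> + 1"
      using \<open>\<not> c \<ge> 0\<close> by (auto simp: l_def field_simps)
    have "(l - 1) * (l * (-c)) \<ge> 0"
      using l \<open>\<not> c \<ge> 0\<close> by (intro mult_nonneg_nonneg) auto
    moreover have "l\<^sup>2 * (-c) = l * (-c) + (l - 1) * (l * (-c))"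
      by (simp add: power2_eq_square algebra_simps)
    ultimately have "l\<^sup>2 * (-c) \<ge> \<bar>a\<bar> + 1"
      using l by linarith
    with even[of l] show False by linarith
  qed
  show ?thesis
  proof (cases "c = 0")
    case True
    have "b = 0"
    proof (rule ccontr)
      assume "b \<noteq> 0"
      with nonneg[of "-(a+1)/(2*b)"] True show False by (simp add: field_simps)
    qed
    with True show ?thesis by simp
  next
    case False
    with \<open>c \<ge> 0\<close> have "c > 0" by simp
    with nonneg[of "-b/c"] show ?thesis by (simp add: field_simps power2_eq_square)
  qed
qed

text \<open>Square matrices and vectors of dimension \<open>n\<close> are functions on \<open>nat\<close> of which only the
  entries below \<open>n\<close> matter; matrices of type \<open>real mat\<close> enter only via \<open>entries\<close>.\<close>

definition quad_form :: "nat \<Rightarrow> (nat \<Rightarrow> nat \<Rightarrow> real) \<Rightarrow> (nat \<Rightarrow> real) \<Rightarrow> real" where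
  "quad_form n A x = (\<Sum>i<n. \<Sum>j<n. x i * A i j * x j)"

definition bilin_form ::
    "nat \<Rightarrow> (nat \<Rightarrow> nat \<Rightarrow> real) \<Rightarrow> (nat \<Rightarrow> real) \<Rightarrow> (nat \<Rightarrow> real) \<Rightarrow> real" where
  "bilin_form n A x y = (\<Sum>i<n. \<Sum>j<n. x i * A i j * y j)"

definition norm_sq :: "nat \<Rightarrow> (nat \<Rightarrow> real) \<Rightarrow> real" where
  "norm_sq n x = (\<Sum>i<n. (x i)\<^sup>2)"

definition mat_vec :: "nat \<Rightarrow> (nat \<Rightarrow> nat \<Rightarrow> real) \<Rightarrow> (nat \<Rightarrow> real) \<Rightarrow> nat \<Rightarrow> real" where
  "mat_vec n A x i = (\<Sum>j<n. A i j * x j)"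

definition mat_prod ::
    "nat \<Rightarrow> (nat \<Rightarrow> nat \<Rightarrow> real) \<Rightarrow> (nat \<Rightarrow> nat \<Rightarrow> real) \<Rightarrow> nat \<Rightarrow> nat \<Rightarrow> real" where
  "mat_prod n A B i j = (\<Sum>l<n. A i l * B l j)"

definition symmetric_fun :: "nat \<Rightarrow> (nat \<Rightarrow> nat \<Rightarrow> real) \<Rightarrow> bool" where
  "symmetric_fun n A \<longleftrightarrow> (\<forall>i<n. \<forall>j<n. A i j = A j i)"

lemma norm_sq_nonneg: "norm_sq n x \<ge> 0"
  unfolding norm_sq_def by (simp add: sum_nonneg)

lemma quad_form_eq_bilin_form: "quad_form n A x = bilin_form n A x x"
  by (simp add: quad_form_def bilin_form_def)

lemma quad_form_cong: "(\<And>i. i < n \<Longrightarrow> x i = y i) \<Longrightarrow> quad_form n A x = quad_form n A y"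
  unfolding quad_form_def by (intro sum.cong refl) auto

lemma bilin_form_commute:
  assumes "symmetric_fun n A"
  shows "bilin_form n A x y = bilin_form n A y x"
proof -
  have "bilin_form n A x y = (\<Sum>j<n. \<Sum>i<n. x i * A i j * y j)"
    unfolding bilin_form_def by (rule sum.swap)
  also have "\<dots> = bilin_form n A y x"
    unfolding bilin_form_def
    by (intro sum.cong refl) (use assms in \<open>auto simp: symmetric_fun_def\<close>)
  finally show ?thesis .
qed

lemma bilin_form_add_scaled_left:
  "bilin_form n A (\<lambda>i. x i + l * y i) z = bilin_form n A x z + l * bilin_form n A y z"
  unfolding bilin_form_def by (simp add: algebra_simps sum.distrib sum_distrib_left)

lemma bilin_form_add_scaled_right:
  "bilin_form n A z (\<lambda>i. x i + l * y i) = bilin_form n A z x + l * bilin_form n A z y"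
  unfolding bilin_form_def by (simp add: algebra_simps sum.distrib sum_distrib_left)

lemma quad_form_add_scaled:
  assumes "symmetric_fun n A"
  shows "quad_form n A (\<lambda>i. x i + l * y i)
       = quad_form n A x + 2 * l * bilin_form n A x y + l\<^sup>2 * quad_form n A y"
  unfolding quad_form_eq_bilin_form bilin_form_add_scaled_left bilin_form_add_scaled_right
  using bilin_form_commute[OF assms, of y x] by (simp add: algebra_simps power2_eq_square)

lemma quad_form_add:
  "quad_form n A (\<lambda>i. x i + y i)
     = quad_form n A x + bilin_form n A x y + bilin_form n A y x + quad_form n A y"
  using bilin_form_add_scaled_left[of n A x 1 y] bilin_form_add_scaled_right[of n A _ x 1 y]
  unfolding quad_form_eq_bilin_form by simp

lemma quad_form_lin_comb:
  "quad_form n (\<lambda>i j. a * A i j + b * B i j) x = a * quad_form n A x + b * quad_form n B x"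
proof -
  have "x i * (a * A i j + b * B i j) * x j = a * (x i * A i j * x j) + b * (x i * B i j * x j)" for i j
    by (simp add: algebra_simps)
  then show ?thesis unfolding quad_form_def by (simp add: sum.distrib sum_distrib_left)
qed

lemma mat_vec_lin_comb:
  "mat_vec n (\<lambda>i j. a * A i j + b * B i j) x i = a * mat_vec n A x i + b * mat_vec n B x i"
proof -
  have "(a * A i j + b * B i j) * x j = a * (A i j * x j) + b * (B i j * x j)" for j
    by (simp add: algebra_simps)
  then show ?thesis unfolding mat_vec_def by (simp add: sum.distrib sum_distrib_left)
qed

lemma quad_form_id: "quad_form n (\<lambda>i j. if i = j then 1 else 0) x = norm_sq n x"
proof -
  have "x i * (if i = j then 1 else 0) * x j = (if i = j then x i * x j else 0)" for i j :: nat
    by simp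
  then show ?thesis unfolding quad_form_def norm_sq_def by (simp add: power2_eq_square)
qed

lemma mat_vec_id:
  assumes "i < n"
  shows "mat_vec n (\<lambda>i j. if i = j then 1 else 0) x i = x i"
proof -
  have "(if i = j then 1 else 0) * x j = (if i = j then x j else 0)" for j by simp
  then show ?thesis using assms unfolding mat_vec_def by simp
qed

lemma cauchy_schwarz_psd:
  assumes "symmetric_fun n A" "\<And>z. quad_form n A z \<ge> 0"
  shows "(bilin_form n A x y)\<^sup>2 \<le> quad_form n A x * quad_form n A y"
  by (rule discriminant_le_of_nonneg) (use assms quad_form_add_scaled[OF assms(1)] in metis)

lemma cauchy_schwarz_sum: "(\<Sum>i<n. x i * y i)\<^sup>2 \<le> norm_sq n x * norm_sq n y"
proof (rule discriminant_le_of_nonneg)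
  fix l
  have "(\<Sum>i<n. (x i + l * y i)\<^sup>2) = norm_sq n x + 2*l*(\<Sum>i<n. x i * y i) + l\<^sup>2*norm_sq n y"
    unfolding norm_sq_def
    by (simp add: power2_eq_square algebra_simps sum.distrib sum_distrib_left)
  moreover have "(\<Sum>i<n. (x i + l * y i)\<^sup>2) \<ge> 0" by (simp add: sum_nonneg)
  ultimately show "norm_sq n x + 2*l*(\<Sum>i<n. x i * y i) + l\<^sup>2*norm_sq n y \<ge> 0" by simp
qed

lemma bilin_form_mat_vec: "bilin_form n A x y = (\<Sum>i<n. x i * mat_vec n A y i)"
  unfolding bilin_form_def mat_vec_def by (simp add: sum_distrib_left mult.assoc)

lemma quad_form_mat_vec: "quad_form n A x = (\<Sum>i<n. x i * mat_vec n A x i)"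
  unfolding quad_form_eq_bilin_form bilin_form_mat_vec ..

lemma mat_vec_eq_0_of_psd:
  assumes "symmetric_fun n A" "\<And>z. quad_form n A z \<ge> 0" "quad_form n A x = 0" "i < n"
  shows "mat_vec n A x i = 0"
proof -
  define e where "e j = (if j = i then 1 else 0 :: real)" for j
  have "(\<Sum>j<n. e j * mat_vec n A x j) = (\<Sum>j<n. if j = i then mat_vec n A x j else 0)"
    by (rule sum.cong) (auto simp: e_def)
  then have "bilin_form n A e x = mat_vec n A x i"
    unfolding bilin_form_mat_vec using assms(4) by simp
  moreover have "(bilin_form n A e x)\<^sup>2 \<le> 0"
    using cauchy_schwarz_psd[OF assms(1,2), of e x] assms(3) by simp
  ultimately show ?thesis by simp
qed

lemma abs_mult_le_weighted_squares:
  fixes e u v :: real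
  assumes "e > 0"
  shows "\<bar>u\<bar> * \<bar>v\<bar> \<le> (e * u\<^sup>2 + v\<^sup>2 / e) / 2"
proof -
  have "0 \<le> (e * \<bar>u\<bar> - \<bar>v\<bar>)\<^sup>2 / e" using assms by simp
  also have "\<dots> = e * u\<^sup>2 + v\<^sup>2 / e - 2 * \<bar>u\<bar> * \<bar>v\<bar>"
    using assms by (simp add: power2_eq_square field_simps)
  finally show ?thesis by simp
qed

lemma bilin_form_abs_le:
  assumes "\<And>i j. i < n \<Longrightarrow> j < n \<Longrightarrow> \<bar>A i j\<bar> \<le> B" "e > 0"
  shows "\<bar>bilin_form n A x y\<bar> \<le> B * n * (e * norm_sq n x + norm_sq n y / e) / 2"
proof -
  have "\<bar>bilin_form n A x y\<bar> \<le> (\<Sum>i<n. \<Sum>j<n. \<bar>x i * A i j * y j\<bar>)"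
    unfolding bilin_form_def by (rule order.trans[OF sum_abs sum_mono]) (rule sum_abs)
  also have "\<dots> \<le> (\<Sum>i<n. \<Sum>j<n. B * ((e * (x i)\<^sup>2 + (y j)\<^sup>2 / e) / 2))"
  proof (intro sum_mono)
    fix i j assume "i \<in> {..<n}" "j \<in> {..<n}"
    then have B: "\<bar>A i j\<bar> \<le> B" using assms by auto
    have "\<bar>x i * A i j * y j\<bar> = \<bar>A i j\<bar> * (\<bar>x i\<bar> * \<bar>y j\<bar>)" by (simp add: abs_mult)
    also have "\<dots> \<le> B * ((e * (x i)\<^sup>2 + (y j)\<^sup>2 / e) / 2)"
      using B abs_mult_le_weighted_squares[OF assms(2)] by (intro mult_mono) auto
    finally show "\<bar>x i * A i j * y j\<bar> \<le> B * ((e * (x i)\<^sup>2 + (y j)\<^sup>2 / e) / 2)" .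
  qed
  also have "\<dots> = B * n * (e * norm_sq n x + norm_sq n y / e) / 2"
    unfolding norm_sq_def
    by (simp add: sum.distrib sum_distrib_left sum_divide_distrib add_divide_distrib algebra_simps)
  finally show ?thesis .
qed

lemma quad_form_abs_le:
  assumes "\<And>i j. i < n \<Longrightarrow> j < n \<Longrightarrow> \<bar>A i j\<bar> \<le> B"
  shows "\<bar>quad_form n A x\<bar> \<le> B * n * norm_sq n x"
proof -
  have "\<bar>bilin_form n A x x\<bar> \<le> B * n * (1 * norm_sq n x + norm_sq n x / 1) / 2"
    by (rule bilin_form_abs_le) (use assms in auto)
  then show ?thesis unfolding quad_form_eq_bilin_form by simp
qed

lemma norm_sq_mat_vec_ge:
  assumes "\<And>z. quad_form n A z \<ge> k * norm_sq n z" "k \<ge> 0"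
  shows "norm_sq n (mat_vec n A z) \<ge> k\<^sup>2 * norm_sq n z"
proof (cases "norm_sq n z = 0")
  case True
  then show ?thesis by (simp add: norm_sq_nonneg)
next
  case False
  then have pos: "norm_sq n z > 0" using norm_sq_nonneg[of n z] by simp
  have "(k * norm_sq n z)\<^sup>2 \<le> (quad_form n A z)\<^sup>2"
    using assms pos by (intro power_mono) auto
  also have "\<dots> \<le> norm_sq n z * norm_sq n (mat_vec n A z)"
    unfolding quad_form_mat_vec by (rule cauchy_schwarz_sum)
  finally have "norm_sq n z * (k\<^sup>2 * norm_sq n z) \<le> norm_sq n z * norm_sq n (mat_vec n A z)"
    by (simp add: power2_eq_square algebra_simps)
  then show ?thesis using pos by simp
qed

section \<open>Coercivity\<close>

lemma quad_form_Suc_schur: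
  assumes sym: "symmetric_fun (Suc n) A" and a: "A n n \<noteq> 0"
  shows "quad_form (Suc n) A x
       = quad_form n (\<lambda>i j. A i j - A i n * A j n / A n n) x
         + ((\<Sum>i<n. A i n * x i) + A n n * x n)\<^sup>2 / A n n"
proof -
  define s where "s = (\<Sum>i<n. A i n * x i)"
  have row: "(\<Sum>j<n. x n * A n j * x j) = x n * s"
    using sym unfolding s_def symmetric_fun_def by (simp add: sum_distrib_left algebra_simps)
  have col: "(\<Sum>i<n. x i * A i n * x n) = x n * s"
    unfolding s_def by (simp add: sum_distrib_left algebra_simps)
  have "(\<Sum>i<n. \<Sum>j<n. x i * (A i n * A j n / A n n) * x j) = s\<^sup>2 / A n n"
    unfolding s_def power2_eq_square sum_product sum_divide_distrib
    by (intro sum.cong refl) (simp add: algebra_simps)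
  then have "quad_form n A x = quad_form n (\<lambda>i j. A i j - A i n * A j n / A n n) x + s\<^sup>2 / A n n"
    unfolding quad_form_def by (simp add: algebra_simps sum_subtractf)
  moreover have "quad_form (Suc n) A x = quad_form n A x + 2 * x n * s + x n * A n n * x n"
    unfolding quad_form_def by (simp add: sum.distrib row col)
  ultimately show ?thesis
    using a unfolding s_def[symmetric] by (simp add: field_simps power2_eq_square)
qed

lemma coercive_add_square_Suc:
  fixes Q :: "(nat \<Rightarrow> real) \<Rightarrow> real"
  assumes a: "a > 0" and c': "c' > 0" "\<And>x. Q x \<ge> c' * norm_sq n x"
  shows "\<exists>c>0. \<forall>x. c * norm_sq (Suc n) x \<le> Q x + ((\<Sum>i<n. b i * x i) + a * x n)\<^sup>2 / a"
proof -
  define E where "E = 1 + 2 * norm_sq n b / a\<^sup>2"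
  define c where "c = min (c' / E) (a / 2)"
  have E: "E \<ge> 1" unfolding E_def using norm_sq_nonneg[of n b] by simp
  have c: "c > 0" unfolding c_def using E c' a by simp
  show ?thesis
  proof (intro exI[of _ c] conjI allI c)
    fix x
    define s where "s = (\<Sum>i<n. b i * x i)"
    define u where "u = s + a * x n"
    have "(x n)\<^sup>2 = (u - s)\<^sup>2 / a\<^sup>2"
      using a by (simp add: u_def power_mult_distrib)
    also have "\<dots> \<le> 2 * (u\<^sup>2 + s\<^sup>2) / a\<^sup>2"
      using zero_le_power2[of "u + s"]
      by (intro divide_right_mono) (auto simp: power2_eq_square algebra_simps)
    also have "\<dots> \<le> 2 * (u\<^sup>2 + norm_sq n b * norm_sq n x) / a\<^sup>2"
      using cauchy_schwarz_sum[where n=n and x=b and y=x] unfolding s_def by (intro divide_right_mono) auto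
    finally have "(x n)\<^sup>2 \<le> 2 * u\<^sup>2 / a\<^sup>2 + (E - 1) * norm_sq n x"
      unfolding E_def by (simp add: add_divide_distrib algebra_simps)
    then have "norm_sq (Suc n) x \<le> E * norm_sq n x + 2 * u\<^sup>2 / a\<^sup>2"
      unfolding norm_sq_def by (simp add: algebra_simps)
    then have "c * norm_sq (Suc n) x \<le> (c * E) * norm_sq n x + (c * 2 / a\<^sup>2) * u\<^sup>2"
      using mult_left_mono[OF _ less_imp_le[OF c]] by (fastforce simp: algebra_simps)
    also have "\<dots> \<le> c' * norm_sq n x + (1 / a) * u\<^sup>2"
    proof (intro add_mono mult_right_mono)
      show "c * E \<le> c'" unfolding c_def using E by (simp add: min_def field_simps)
      show "c * 2 / a\<^sup>2 \<le> 1 / a" unfolding c_def using a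
        by (auto simp: min_def field_simps power2_eq_square)
    qed (auto simp: norm_sq_nonneg)
    also have "\<dots> \<le> Q x + u\<^sup>2 / a" using c'(2)[of x] by simp
    finally show "c * norm_sq (Suc n) x \<le> Q x + (s + a * x n)\<^sup>2 / a" unfolding u_def .
  qed
qed

text \<open>Compactness of the unit sphere is replaced by induction on the dimension, eliminating the
  last coordinate via the Schur complement.\<close>

lemma coercive_of_pos_def:
  assumes "symmetric_fun n A" "\<And>x. (\<exists>i<n. x i \<noteq> 0) \<Longrightarrow> quad_form n A x > 0"
  shows "\<exists>c>0. \<forall>x. quad_form n A x \<ge> c * norm_sq n x"
  using assms
proof (induction n arbitrary: A)
  case 0
  show ?case by (rule exI[of _ 1]) (simp add: quad_form_def norm_sq_def)
next
  case (Suc n A)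
  note sym = Suc.prems(1) and pd = Suc.prems(2)
  define a where "a = A n n"
  define S where "S i j = A i j - A i n * A j n / a" for i j
  define s where "s x = (\<Sum>i<n. A i n * x i)" for x
  have "quad_form (Suc n) A (\<lambda>i. if i = n then 1 else 0) = a"
    unfolding quad_form_def a_def by (simp add: if_distrib sum.delta cong: if_cong)
  moreover have "quad_form (Suc n) A (\<lambda>i. if i = n then 1 else 0) > 0" by (rule pd) auto
  ultimately have a: "a > 0" by simp
  have schur: "quad_form (Suc n) A x = quad_form n S x + (s x + a * x n)\<^sup>2 / a" for x
    unfolding S_def s_def a_def by (rule quad_form_Suc_schur[OF sym]) (use a a_def in simp)
  have "symmetric_fun n S" using sym unfolding symmetric_fun_def S_def by auto
  moreover have "quad_form n S x > 0" if "\<exists>i<n. x i \<noteq> 0" for x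
  proof -
    define x' where "x' = x(n := - s x / a)"
    have "s x' = s x" "\<And>B. quad_form n B x' = quad_form n B x"
      unfolding s_def quad_form_def x'_def by (auto intro!: sum.cong)
    moreover have "quad_form (Suc n) A x' > 0" by (rule pd) (use that in \<open>auto simp: x'_def\<close>)
    ultimately show ?thesis unfolding schur using a by (simp add: x'_def)
  qed
  ultimately obtain c' where "c' > 0" "\<And>x. quad_form n S x \<ge> c' * norm_sq n x"
    using Suc.IH by blast
  from coercive_add_square_Suc[OF a this, of "\<lambda>i. A i n"] show ?case
    unfolding schur s_def by auto
qed

lemma finite_abs_bounded: "finite S \<Longrightarrow> \<exists>B\<ge>0. \<forall>x\<in>S. \<bar>f x :: real\<bar> \<le> B"
  by (intro exI[of _ "\<Sum>x\<in>S. \<bar>f x\<bar>"]) (auto intro: member_le_sum sum_nonneg)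

lemma entries_bounded:
  fixes A :: "nat \<Rightarrow> nat \<Rightarrow> real"
  shows "\<exists>B\<ge>0. \<forall>i<n. \<forall>j<n. \<bar>A i j\<bar> \<le> B"
proof -
  have "finite ({..<n} \<times> {..<n})" by simp
  from finite_abs_bounded[OF this, of "\<lambda>(i, j). A i j"]
  obtain B where "B \<ge> 0" "\<forall>p \<in> {..<n} \<times> {..<n}. \<bar>case p of (i, j) \<Rightarrow> A i j\<bar> \<le> B" by blast
  then show ?thesis by (intro exI[of _ B]) auto
qed

lemma mat_vec_mat_prod: "mat_vec n (mat_prod n A B) x i = mat_vec n A (mat_vec n B x) i"
proof -
  have "mat_vec n (mat_prod n A B) x i = (\<Sum>j<n. \<Sum>l<n. A i l * B l j * x j)"
    unfolding mat_vec_def mat_prod_def by (simp add: sum_distrib_right)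
  also have "\<dots> = (\<Sum>l<n. \<Sum>j<n. A i l * B l j * x j)" by (rule sum.swap)
  also have "\<dots> = mat_vec n A (mat_vec n B x) i"
    unfolding mat_vec_def by (simp add: sum_distrib_left mult.assoc)
  finally show ?thesis .
qed

lemma symmetric_mat_prod_of_commute:
  assumes "symmetric_fun n A" "symmetric_fun n B"
    and comm: "\<And>i j. i < n \<Longrightarrow> j < n \<Longrightarrow> mat_prod n A B i j = mat_prod n B A i j"
  shows "symmetric_fun n (mat_prod n A B)"
  unfolding symmetric_fun_def
proof (intro allI impI)
  fix i j assume "i < n" "j < n"
  then have "mat_prod n A B i j = mat_prod n B A i j" by (rule comm)
  also have "\<dots> = mat_prod n A B j i"
    unfolding mat_prod_def using assms(1,2) \<open>i < n\<close> \<open>j < n\<close>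
    by (intro sum.cong refl) (auto simp: symmetric_fun_def mult.commute)
  finally show "mat_prod n A B i j = mat_prod n A B j i" .
qed

text \<open>By Cauchy--Schwarz for the form, \<open>|S x|\<^sup>4 = (x\<^sup>T S (S x))\<^sup>2 \<le> (x\<^sup>T S x) C |S x|\<^sup>2\<close>.\<close>

lemma coercive_of_psd_mat_vec_ge:
  assumes S: "symmetric_fun n S" and psd: "\<And>z. quad_form n S z \<ge> 0"
    and C: "C > 0" "\<And>y. quad_form n S y \<le> C * norm_sq n y"
    and low: "norm_sq n (mat_vec n S x) \<ge> c * norm_sq n x" and c: "c \<ge> 0"
  shows "quad_form n S x \<ge> (c / C) * norm_sq n x"
proof -
  define y where "y = mat_vec n S x"
  have "bilin_form n S x y = bilin_form n S y x" by (rule bilin_form_commute[OF S])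
  then have "bilin_form n S x y = norm_sq n y"
    unfolding bilin_form_mat_vec norm_sq_def y_def by (simp add: power2_eq_square)
  then have "(norm_sq n y)\<^sup>2 \<le> quad_form n S x * quad_form n S y"
    using cauchy_schwarz_psd[OF S psd, of x y] by simp
  also have "\<dots> \<le> quad_form n S x * (C * norm_sq n y)" by (rule mult_left_mono[OF C(2) psd])
  finally have cs: "norm_sq n y * norm_sq n y \<le> norm_sq n y * (C * quad_form n S x)"
    by (simp add: power2_eq_square algebra_simps)
  show ?thesis
  proof (cases "norm_sq n y = 0")
    case True
    then have "(c / C) * norm_sq n x \<le> 0"
      using low C(1) unfolding y_def by (simp add: mult_le_0_iff divide_le_0_iff)
    then show ?thesis using psd[of x] by linarith
  next
    case False
    then have "norm_sq n y \<le> C * quad_form n S x"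
      using cs norm_sq_nonneg[of n y] by simp
    then have "c * norm_sq n x \<le> C * quad_form n S x" using low unfolding y_def by simp
    then show ?thesis using C(1) by (simp add: field_simps mult.commute)
  qed
qed

lemma coercive_along_path:
  fixes q :: "real \<Rightarrow> 'a \<Rightarrow> real" and w :: "'a \<Rightarrow> real"
  assumes start: "\<And>x. q 0 x \<ge> 0"
    and step: "\<And>s t x. 0 \<le> s \<Longrightarrow> s \<le> t \<Longrightarrow> t \<le> 1 \<Longrightarrow> q t x \<ge> q s x - D * (t - s) * w x"
    and uniform: "\<And>t x. 0 \<le> t \<Longrightarrow> t \<le> 1 \<Longrightarrow> (\<And>z. q t z \<ge> 0) \<Longrightarrow> q t x \<ge> \<delta> * w x"
    and w: "\<And>x. w x \<ge> 0" and \<delta>: "\<delta> > 0"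
  shows "q 1 x \<ge> \<delta> * w x"
proof -
  obtain m :: nat where m: "real m > max (D / \<delta>) 0" using reals_Archimedean2 by blast
  then have m0: "m > 0" and Dm: "D * (1 / m) \<le> \<delta>" using \<delta> by (auto simp: field_simps)
  have "\<forall>x. q (j / m) x \<ge> 0" if "j \<le> m" for j
    using that
  proof (induction j)
    case 0
    then show ?case using start by simp
  next
    case (Suc j)
    then have t: "0 \<le> j / m" "j / m \<le> Suc j / m" "Suc j / m \<le> 1"
      using m0 by (auto simp: divide_right_mono)
    show ?case
    proof
      fix x
      have "real (Suc j) / m - j / m = 1 / m" by (simp add: diff_divide_distrib[symmetric])
      then have "q (Suc j / m) x \<ge> q (j / m) x - D * (1 / m) * w x"
        using step[OF t, of x] by simp
      moreover have "q (j / m) x \<ge> \<delta> * w x" using uniform t Suc by auto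
      moreover have "D * (1 / m) * w x \<le> \<delta> * w x" using Dm w[of x] by (rule mult_right_mono)
      ultimately show "q (Suc j / m) x \<ge> 0" using \<delta> w[of x] by linarith
    qed
  qed
  from this[of m] show ?thesis using uniform[of 1] m0 by simp
qed

lemma coercive_convex_with_identity:
  assumes t: "0 \<le> t" "t \<le> 1" and K: "\<And>x. quad_form n K x \<ge> k * norm_sq n x"
  shows "quad_form n (\<lambda>i j. (1 - t) * (if i = j then 1 else 0) + t * K i j) w
       \<ge> min 1 k * norm_sq n w"
proof -
  have "min 1 k * norm_sq n w \<le> norm_sq n w"
    using mult_right_mono[OF min.cobounded1 norm_sq_nonneg, of 1 k n w] by simp
  moreover have "min 1 k * norm_sq n w \<le> quad_form n K w"
    using mult_right_mono[OF min.cobounded2 norm_sq_nonneg, of 1 k n w] K[of w] by linarith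
  ultimately have "(1 - t) * (min 1 k * norm_sq n w) + t * (min 1 k * norm_sq n w)
      \<le> (1 - t) * norm_sq n w + t * quad_form n K w"
    using t by (intro add_mono mult_left_mono) auto
  then show ?thesis unfolding quad_form_lin_comb quad_form_id by (simp add: algebra_simps)
qed

lemma norm_sq_mat_vec_convex_ge:
  assumes t: "0 \<le> t" "t \<le> 1"
    and K: "k > 0" "\<And>x. quad_form n K x \<ge> k * norm_sq n x"
    and G: "g \<ge> 0" "\<And>x. quad_form n G x \<ge> g * norm_sq n x"
  shows "norm_sq n (\<lambda>i. (1 - t) * mat_vec n G x i + t * mat_vec n (mat_prod n K G) x i)
       \<ge> (min 1 k * g)\<^sup>2 * norm_sq n x"
proof -
  define Kt where "Kt i j = (1 - t) * (if i = j then 1 else 0) + t * K i j" for i j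
  define z where "z = mat_vec n G x"
  have "norm_sq n (mat_vec n Kt z)
      = norm_sq n (\<lambda>i. (1 - t) * mat_vec n G x i + t * mat_vec n (mat_prod n K G) x i)"
    unfolding norm_sq_def Kt_def mat_vec_lin_comb mat_vec_mat_prod z_def
    by (intro sum.cong) (auto simp: mat_vec_id)
  moreover have "(min 1 k * g)\<^sup>2 * norm_sq n x = (min 1 k)\<^sup>2 * (g\<^sup>2 * norm_sq n x)"
    by (simp add: power_mult_distrib)
  moreover have "\<dots> \<le> (min 1 k)\<^sup>2 * norm_sq n z"
    unfolding z_def by (intro mult_left_mono norm_sq_mat_vec_ge[OF G(2) G(1)]) simp
  moreover have "\<dots> \<le> norm_sq n (mat_vec n Kt z)"
    using coercive_convex_with_identity[OF t K(2)] K(1)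
    unfolding Kt_def by (intro norm_sq_mat_vec_ge) auto
  ultimately show ?thesis by linarith
qed

text \<open>Deform \<open>G\<close> into \<open>K G\<close> through \<open>S t = ((1 - t) I + t K) G\<close>: every \<open>S t\<close> is symmetric
  (this is where commutativity enters) and uniformly invertible, so positivity survives.\<close>

lemma coercive_mat_prod_of_commute:
  assumes symK: "symmetric_fun n K" and symG: "symmetric_fun n G"
    and comm: "\<And>i j. i < n \<Longrightarrow> j < n \<Longrightarrow> mat_prod n K G i j = mat_prod n G K i j"
    and K: "k > 0" "\<And>x. quad_form n K x \<ge> k * norm_sq n x"
    and G: "g > 0" "\<And>x. quad_form n G x \<ge> g * norm_sq n x"
  shows "\<exists>\<delta>>0. \<forall>x. quad_form n (mat_prod n K G) x \<ge> \<delta> * norm_sq n x"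
proof -
  define KG where "KG = mat_prod n K G"
  define S where "S t i j = (1 - t) * G i j + t * KG i j" for t i j
  have symS: "symmetric_fun n (S t)" for t
    using symG symmetric_mat_prod_of_commute[OF symK symG comm]
    unfolding symmetric_fun_def S_def KG_def by auto
  have qS: "quad_form n (S t) x = (1 - t) * quad_form n G x + t * quad_form n KG x" for t x
    unfolding S_def by (rule quad_form_lin_comb)
  obtain B where "B \<ge> 0" and B: "\<forall>i<n. \<forall>j<n. \<bar>\<bar>G i j\<bar> + \<bar>KG i j\<bar>\<bar> \<le> B"
    using entries_bounded[of n "\<lambda>i j. \<bar>G i j\<bar> + \<bar>KG i j\<bar>"] by blast
  have "\<bar>G i j\<bar> \<le> B" "\<bar>KG i j\<bar> \<le> B" if "i < n" "j < n" for i j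
    using B that abs_ge_zero[of "G i j"] abs_ge_zero[of "KG i j"] by fastforce+
  then have bG: "\<bar>quad_form n G x\<bar> \<le> B * n * norm_sq n x"
    and bKG: "\<bar>quad_form n KG x\<bar> \<le> B * n * norm_sq n x" for x
    by (simp_all add: quad_form_abs_le)
  define C where "C = B * n + 1"
  have C: "C > 0" unfolding C_def using \<open>B \<ge> 0\<close> by (simp add: add_nonneg_pos)
  have up: "quad_form n (S t) y \<le> C * norm_sq n y" if "0 \<le> t" "t \<le> 1" for t y
  proof -
    have "quad_form n (S t) y \<le> (1 - t) * (B * n * norm_sq n y) + t * (B * n * norm_sq n y)"
      unfolding qS using that bG[of y] bKG[of y] by (intro add_mono mult_left_mono) auto
    also have "\<dots> \<le> C * norm_sq n y"
      unfolding C_def using norm_sq_nonneg[of n y] by (simp add: algebra_simps)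
    finally show ?thesis .
  qed
  define \<delta> where "\<delta> = (min 1 k * g)\<^sup>2 / C"
  have \<delta>: "\<delta> > 0" unfolding \<delta>_def using K(1) G(1) C by simp
  have "quad_form n (S 1) x \<ge> \<delta> * norm_sq n x" for x
  proof (rule coercive_along_path[where q = "\<lambda>t. quad_form n (S t)" and D = "2 * B * n"])
    show "quad_form n (S 0) z \<ge> 0" for z
      using G(2)[of z] mult_nonneg_nonneg[OF less_imp_le[OF G(1)] norm_sq_nonneg[of n z]]
      unfolding qS by simp
    show "quad_form n (S t) z \<ge> quad_form n (S s) z - 2 * B * n * (t - s) * norm_sq n z"
      if "0 \<le> s" "s \<le> t" "t \<le> 1" for s t z
    proof -
      have "quad_form n KG z - quad_form n G z \<ge> - (2 * B * n * norm_sq n z)"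
        using bG[of z] bKG[of z] by (simp add: abs_le_iff)
      then have "(t - s) * (quad_form n KG z - quad_form n G z) \<ge> (t - s) * - (2 * B * n * norm_sq n z)"
        using that by (intro mult_left_mono) auto
      then show ?thesis unfolding qS by (simp add: algebra_simps)
    qed
    show "quad_form n (S t) z \<ge> \<delta> * norm_sq n z"
      if "0 \<le> t" "t \<le> 1" "\<And>y. quad_form n (S t) y \<ge> 0" for t z
      unfolding \<delta>_def
    proof (rule coercive_of_psd_mat_vec_ge[OF symS that(3) C up[OF that(1,2)]])
      have "mat_vec n (S t) z = (\<lambda>i. (1 - t) * mat_vec n G z i + t * mat_vec n KG z i)"
        unfolding S_def by (rule ext) (rule mat_vec_lin_comb)
      then show "norm_sq n (mat_vec n (S t) z) \<ge> (min 1 k * g)\<^sup>2 * norm_sq n z"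
        unfolding KG_def using that(1,2) K G by (simp add: norm_sq_mat_vec_convex_ge)
    qed simp
  qed (use \<delta> norm_sq_nonneg in auto)
  then show ?thesis using \<delta> unfolding qS KG_def by auto
qed

section \<open>Laplacian forms\<close>

lemma laplacian_quad_form_eq:
  assumes sym: "symmetric_fun N L" and rows: "\<And>i. i < N \<Longrightarrow> (\<Sum>j<N. L i j) = 0"
  shows "quad_form N L w = - (\<Sum>i<N. \<Sum>j<N. L i j * (w i - w j)\<^sup>2) / 2"
proof -
  have "(\<Sum>i<N. \<Sum>j<N. L i j * (w i)\<^sup>2) = 0"
    by (simp add: sum_distrib_right[symmetric] rows)
  moreover have "(\<Sum>i<N. \<Sum>j<N. L i j * (w j)\<^sup>2) = (\<Sum>j<N. \<Sum>i<N. L j i * (w j)\<^sup>2)"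
    using sym unfolding symmetric_fun_def by (subst sum.swap) (intro sum.cong refl, auto)
  then have "(\<Sum>i<N. \<Sum>j<N. L i j * (w j)\<^sup>2) = 0"
    by (simp add: sum_distrib_right[symmetric] rows)
  moreover have "(\<Sum>i<N. \<Sum>j<N. L i j * (w i - w j)\<^sup>2)
      = (\<Sum>i<N. \<Sum>j<N. L i j * (w i)\<^sup>2) + (\<Sum>i<N. \<Sum>j<N. L i j * (w j)\<^sup>2) - 2 * quad_form N L w"
    unfolding quad_form_def
    by (simp add: power2_eq_square algebra_simps sum.distrib sum_subtractf sum_distrib_left)
  ultimately show ?thesis by simp
qed

lemma laplacian_quad_form_nonneg:
  assumes "symmetric_fun N L" "\<And>i j. i < N \<Longrightarrow> j < N \<Longrightarrow> i \<noteq> j \<Longrightarrow> L i j \<le> 0"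
    and "\<And>i. i < N \<Longrightarrow> (\<Sum>j<N. L i j) = 0"
  shows "quad_form N L w \<ge> 0"
proof -
  have "L i j * (w i - w j)\<^sup>2 \<le> 0" if "i < N" "j < N" for i j
    using assms(2)[OF that] by (cases "i = j") (auto simp: mult_nonpos_nonneg)
  then have "(\<Sum>i<N. \<Sum>j<N. L i j * (w i - w j)\<^sup>2) \<le> 0" by (intro sum_nonpos) auto
  then show ?thesis using laplacian_quad_form_eq[OF assms(1,3), of w] by linarith
qed

lemma laplacian_quad_form_add_const:
  assumes "symmetric_fun N L" "\<And>i. i < N \<Longrightarrow> (\<Sum>j<N. L i j) = 0"
  shows "quad_form N L (\<lambda>i. w i + c) = quad_form N L w"
  using assms by (simp add: laplacian_quad_form_eq)

text \<open>Adding the rank-one form \<open>(\<Sum>i. x i)\<^sup>2\<close> to the Laplacian yields a positive definite form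
  exactly when the kernel of the Laplacian meets the mean-zero hyperplane trivially.\<close>

lemma laplacian_coercive_of_kernel:
  assumes sym: "symmetric_fun N L"
    and off: "\<And>i j. i < N \<Longrightarrow> j < N \<Longrightarrow> i \<noteq> j \<Longrightarrow> L i j \<le> 0"
    and rows: "\<And>i. i < N \<Longrightarrow> (\<Sum>j<N. L i j) = 0"
    and ker: "\<And>w. \<forall>i<N. mat_vec N L w i = 0 \<Longrightarrow> (\<Sum>i<N. w i) = 0 \<Longrightarrow> \<forall>i<N. w i = 0"
  shows "\<exists>c>0. \<forall>w. (\<Sum>i<N. w i) = 0 \<longrightarrow> quad_form N L w \<ge> c * norm_sq N w"
proof -
  define Q where "Q i j = L i j + 1" for i j
  have qQ: "quad_form N Q x = quad_form N L x + (\<Sum>i<N. x i)\<^sup>2" for x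
    unfolding quad_form_def Q_def power2_eq_square sum_product
    by (simp add: algebra_simps sum.distrib)
  have psd: "quad_form N L z \<ge> 0" for z by (rule laplacian_quad_form_nonneg[OF sym off rows])
  have "symmetric_fun N Q" using sym unfolding symmetric_fun_def Q_def by auto
  moreover have "quad_form N Q x > 0" if "\<exists>i<N. x i \<noteq> 0" for x
  proof (rule ccontr)
    assume "\<not> quad_form N Q x > 0"
    then have "quad_form N L x = 0" "(\<Sum>i<N. x i)\<^sup>2 = 0"
      using psd[of x] zero_le_power2[of "\<Sum>i<N. x i"] unfolding qQ by linarith+
    then have "quad_form N L x = 0" "(\<Sum>i<N. x i) = 0" by simp_all
    with ker mat_vec_eq_0_of_psd[OF sym psd] that show False by blast
  qed
  ultimately obtain c where "c > 0" "\<And>x. quad_form N Q x \<ge> c * norm_sq N x"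
    using coercive_of_pos_def by blast
  then show ?thesis unfolding qQ by (intro exI[of _ c]) (metis add.right_neutral zero_power2)
qed

section \<open>Average and disagreement\<close>

lemma sum_norm_sq_add_mean_zero:
  fixes W :: "nat \<Rightarrow> nat \<Rightarrow> real"
  assumes "\<And>m. (\<Sum>n<N. W n m) = 0"
  shows "(\<Sum>n<N. norm_sq M (\<lambda>m. v m + W n m)) = N * norm_sq M v + (\<Sum>n<N. norm_sq M (W n))"
proof -
  have "(\<Sum>n<N. norm_sq M (\<lambda>m. v m + W n m))
      = (\<Sum>m<M. N * (v m)\<^sup>2 + 2 * v m * (\<Sum>n<N. W n m) + (\<Sum>n<N. (W n m)\<^sup>2))"
    unfolding norm_sq_def
    by (subst sum.swap) (simp add: power2_eq_square algebra_simps sum.distrib sum_distrib_left)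
  also have "\<dots> = N * norm_sq M v + (\<Sum>m<M. \<Sum>n<N. (W n m)\<^sup>2)"
    unfolding assms norm_sq_def by (simp add: sum.distrib sum_distrib_left)
  also have "(\<Sum>m<M. \<Sum>n<N. (W n m)\<^sup>2) = (\<Sum>n<N. norm_sq M (W n))"
    unfolding norm_sq_def by (rule sum.swap)
  finally show ?thesis .
qed

lemma quad_form_add_ge:
  assumes B: "\<And>i j. i < n \<Longrightarrow> j < n \<Longrightarrow> \<bar>A i j\<bar> \<le> B" and e: "e > 0"
  shows "quad_form n A (\<lambda>i. x i + y i)
       \<ge> quad_form n A x - B * n * e * norm_sq n x - (B * n / e + B * n) * norm_sq n y"
proof -
  have "\<bar>bilin_form n A x y\<bar> \<le> B * n * (e * norm_sq n x + norm_sq n y / e) / 2"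
    by (rule bilin_form_abs_le[OF B e])
  moreover have "\<bar>bilin_form n A y x\<bar> \<le> B * n * ((1 / e) * norm_sq n y + norm_sq n x / (1 / e)) / 2"
    by (rule bilin_form_abs_le) (use B e in auto)
  moreover have "\<bar>quad_form n A y\<bar> \<le> B * n * norm_sq n y" by (rule quad_form_abs_le[OF B])
  moreover have "B * n * (e * norm_sq n x + norm_sq n y / e) / 2
      + B * n * ((1 / e) * norm_sq n y + norm_sq n x / (1 / e)) / 2 + B * n * norm_sq n y
      = B * n * e * norm_sq n x + (B * n / e + B * n) * norm_sq n y"
    using e by (simp add: field_simps)
  ultimately show ?thesis unfolding quad_form_add by linarith
qed

lemma sum_quad_form_add_ge:
  fixes A :: "nat \<Rightarrow> nat \<Rightarrow> nat \<Rightarrow> real"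
  assumes N: "N > 0" and \<kappa>: "\<kappa> > 0" "\<And>v. (\<Sum>n<N. quad_form M (A n) v) \<ge> \<kappa> * norm_sq M v"
  shows "\<exists>C\<ge>0. \<forall>v W. (\<Sum>n<N. quad_form M (A n) (\<lambda>m. v m + W n m))
           \<ge> \<kappa> / 2 * norm_sq M v - C * (\<Sum>n<N. norm_sq M (W n))"
proof -
  have "finite ({..<N} \<times> {..<M} \<times> {..<M})" by simp
  from finite_abs_bounded[OF this, of "\<lambda>(n, i, j). A n i j"]
  obtain B where B: "B \<ge> 0" "\<And>n i j. n < N \<Longrightarrow> i < M \<Longrightarrow> j < M \<Longrightarrow> \<bar>A n i j\<bar> \<le> B"
    by fastforce
  have BM: "B * M + 1 > 0" using B by (simp add: add_nonneg_pos)
  define e where "e = \<kappa> / (2 * N * (B * M + 1))"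
  have e: "e > 0" unfolding e_def using \<kappa> BM N by simp
  have "N * (B * M) * e = \<kappa> / 2 * (B * M / (B * M + 1))"
    unfolding e_def using N BM by simp
  also have "\<dots> \<le> \<kappa> / 2" using \<kappa> BM by (intro mult_left_le) auto
  finally have small: "N * (B * M) * e * norm_sq M v \<le> \<kappa> / 2 * norm_sq M v" for v
    using norm_sq_nonneg by (rule mult_right_mono)
  have sum: "(\<Sum>n<N. quad_form M (A n) (\<lambda>m. v m + W n m))
      \<ge> \<kappa> * norm_sq M v - N * (B * M) * e * norm_sq M v
        - (B * M / e + B * M) * (\<Sum>n<N. norm_sq M (W n))" for v W
  proof -
    have "(\<Sum>n<N. quad_form M (A n) (\<lambda>m. v m + W n m))
        \<ge> (\<Sum>n<N. quad_form M (A n) v - B * M * e * norm_sq M v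
              - (B * M / e + B * M) * norm_sq M (W n))"
      by (intro sum_mono quad_form_add_ge) (use B e in auto)
    then show ?thesis using \<kappa>(2)[of v] by (simp add: sum_subtractf sum_distrib_left)
  qed
  show ?thesis
  proof (intro exI[of _ "B * M / e + B * M"] conjI allI)
    show "B * M / e + B * M \<ge> 0" using B e by simp
    fix v W
    show "(\<Sum>n<N. quad_form M (A n) (\<lambda>m. v m + W n m))
        \<ge> \<kappa> / 2 * norm_sq M v - (B * M / e + B * M) * (\<Sum>n<N. norm_sq M (W n))"
      using sum[of v W] small[of v] by linarith
  qed
qed

lemma sum_quad_form_laplacian_ge:
  fixes L W :: "nat \<Rightarrow> nat \<Rightarrow> real"
  assumes "symmetric_fun N L" "\<And>i. i < N \<Longrightarrow> (\<Sum>j<N. L i j) = 0"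
    and cL: "\<And>w. (\<Sum>i<N. w i) = 0 \<Longrightarrow> quad_form N L w \<ge> cL * norm_sq N w"
    and W: "\<And>m. (\<Sum>n<N. W n m) = 0"
  shows "(\<Sum>m<M. quad_form N L (\<lambda>n. v m + W n m)) \<ge> cL * (\<Sum>n<N. norm_sq M (W n))"
proof -
  have "cL * (\<Sum>n<N. norm_sq M (W n)) = (\<Sum>m<M. cL * norm_sq N (\<lambda>n. W n m))"
    unfolding norm_sq_def sum_distrib_left[symmetric] by (subst sum.swap) simp
  also have "\<dots> \<le> (\<Sum>m<M. quad_form N L (\<lambda>n. W n m))" by (intro sum_mono cL) (rule W)
  also have "\<dots> = (\<Sum>m<M. quad_form N L (\<lambda>n. v m + W n m))"
    using laplacian_quad_form_add_const[OF assms(1,2)] by (simp add: add.commute)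
  finally show ?thesis .
qed

lemma laplacian_plus_local_forms_coercive:
  fixes L :: "nat \<Rightarrow> nat \<Rightarrow> real" and A :: "nat \<Rightarrow> nat \<Rightarrow> nat \<Rightarrow> real"
  assumes N: "N > 0" and symL: "symmetric_fun N L"
    and rows: "\<And>i. i < N \<Longrightarrow> (\<Sum>j<N. L i j) = 0"
    and cL: "cL > 0" "\<And>w. (\<Sum>i<N. w i) = 0 \<Longrightarrow> quad_form N L w \<ge> cL * norm_sq N w"
    and \<kappa>: "\<kappa> > 0" "\<And>v. (\<Sum>n<N. quad_form M (A n) v) \<ge> \<kappa> * norm_sq M v"
  shows "\<exists>R c. c > 0 \<and> (\<forall>\<alpha> \<beta> Y. \<alpha> > 0 \<longrightarrow> \<beta> \<ge> R * \<alpha> \<longrightarrow>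
           c * \<alpha> * (\<Sum>n<N. norm_sq M (Y n))
             \<le> \<beta> * (\<Sum>m<M. quad_form N L (\<lambda>n. Y n m)) + \<alpha> * (\<Sum>n<N. quad_form M (A n) (Y n)))"
proof -
  obtain C where "C \<ge> 0" and C: "\<And>v W. (\<Sum>n<N. quad_form M (A n) (\<lambda>m. v m + W n m))
      \<ge> \<kappa> / 2 * norm_sq M v - C * (\<Sum>n<N. norm_sq M (W n))"
    using sum_quad_form_add_ge[OF N \<kappa>] by blast
  define c where "c = min (\<kappa> / (2 * N)) 1"
  have c: "c > 0" unfolding c_def using \<kappa> N by simp
  have "c * \<alpha> * (\<Sum>n<N. norm_sq M (Y n))
      \<le> \<beta> * (\<Sum>m<M. quad_form N L (\<lambda>n. Y n m)) + \<alpha> * (\<Sum>n<N. quad_form M (A n) (Y n))"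
    if \<alpha>: "\<alpha> > 0" and \<beta>: "\<beta> \<ge> (C + 1) / cL * \<alpha>" for \<alpha> \<beta> and Y :: "nat \<Rightarrow> nat \<Rightarrow> real"
  proof -
    define v where "v m = (\<Sum>n<N. Y n m) / N" for m
    define W where "W n m = Y n m - v m" for n m
    define Wsq where "Wsq = (\<Sum>n<N. norm_sq M (W n))"
    have Y: "Y n = (\<lambda>m. v m + W n m)" for n unfolding W_def by auto
    have W: "(\<Sum>n<N. W n m) = 0" for m unfolding W_def v_def using N by (simp add: sum_subtractf)
    have Wsq: "Wsq \<ge> 0" unfolding Wsq_def by (intro sum_nonneg) (simp add: norm_sq_nonneg)
    have "\<alpha> * (C + 1) \<le> \<beta> * cL" using \<beta> cL by (simp add: field_simps)
    then have "\<alpha> * (C + 1) * Wsq \<le> \<beta> * cL * Wsq" using Wsq by (rule mult_right_mono)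
    also have "\<dots> = \<beta> * (cL * Wsq)" by (simp add: mult.assoc)
    also have "\<dots> \<le> \<beta> * (\<Sum>m<M. quad_form N L (\<lambda>n. Y n m))"
      using sum_quad_form_laplacian_ge[OF symL rows cL(2) W] \<open>C \<ge> 0\<close> \<alpha> \<beta> cL
      unfolding Y Wsq_def by (intro mult_left_mono) (auto intro: order.trans[rotated])
    finally have consensus: "\<alpha> * (C + 1) * Wsq \<le> \<beta> * (\<Sum>m<M. quad_form N L (\<lambda>n. Y n m))" .
    have local: "\<alpha> * (\<kappa> / 2 * norm_sq M v - C * Wsq) \<le> \<alpha> * (\<Sum>n<N. quad_form M (A n) (Y n))"
      using C[of v W] \<alpha> unfolding Y Wsq_def by (intro mult_left_mono) auto
    have "c * N * norm_sq M v \<le> \<kappa> / 2 * norm_sq M v"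
      using norm_sq_nonneg[of M v] N unfolding c_def
      by (intro mult_right_mono) (auto simp: min_def field_simps)
    moreover have "c * Wsq \<le> Wsq"
      using mult_right_mono[OF min.cobounded2 Wsq, of "\<kappa> / (2 * N)" 1] unfolding c_def by simp
    ultimately have "c * (\<Sum>n<N. norm_sq M (Y n)) \<le> \<kappa> / 2 * norm_sq M v + Wsq"
      unfolding Y sum_norm_sq_add_mean_zero[OF W] Wsq_def[symmetric] by (simp add: algebra_simps)
    then have "\<alpha> * (c * (\<Sum>n<N. norm_sq M (Y n))) \<le> \<alpha> * (\<kappa> / 2 * norm_sq M v + Wsq)"
      using \<alpha> by (intro mult_left_mono) auto
    then have "c * \<alpha> * (\<Sum>n<N. norm_sq M (Y n)) \<le> \<alpha> * (\<kappa> / 2 * norm_sq M v + Wsq)"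
      by (simp add: ac_simps)
    also have "\<dots> = \<alpha> * (C + 1) * Wsq + \<alpha> * (\<kappa> / 2 * norm_sq M v - C * Wsq)"
      by (simp add: algebra_simps)
    finally show ?thesis using consensus local by linarith
  qed
  then show ?thesis using c by blast
qed

section \<open>Block matrices\<close>

definition entries :: "'a mat \<Rightarrow> nat \<Rightarrow> nat \<Rightarrow> 'a" where
  "entries A i j = A $$ (i, j)"

lemma index_lt_mult:
  fixes n N m M :: nat
  assumes "n < N" "m < M"
  shows "n * M + m < N * M"
proof -
  have "n * M + m < (n + 1) * M" using assms by simp
  also have "\<dots> \<le> N * M" using assms by (intro mult_right_mono) auto
  finally show ?thesis .
qed

lemma sum_lessThan_mult:
  fixes f :: "nat \<Rightarrow> 'a :: comm_monoid_add"
  shows "(\<Sum>i<N * M. f i) = (\<Sum>n<N. \<Sum>m<M. f (n * M + m))"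
proof -
  have "(\<Sum>i\<in>{n * M..<n * M + M}. f i) = (\<Sum>m<M. f (n * M + m))" for n
  proof -
    have "(\<Sum>i\<in>{n * M..<n * M + M}. f i) = (\<Sum>i\<in>{0 + n * M..<M + n * M}. f i)"
      by (simp add: add.commute)
    also have "\<dots> = (\<Sum>m\<in>{0..<M}. f (m + n * M))" by (rule sum.shift_bounds_nat_ivl)
    finally show ?thesis by (simp add: lessThan_atLeast0 add.commute)
  qed
  then show ?thesis by (simp add: sum.nat_group[symmetric])
qed

lemma scalar_prod_eq_sum:
  "v \<in> carrier_vec n \<Longrightarrow> w \<in> carrier_vec n \<Longrightarrow> v \<bullet> w = (\<Sum>i<n. v $ i * w $ i)"
  unfolding scalar_prod_def by (simp add: lessThan_atLeast0)

lemma index_mult_mat_sum: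
  assumes "A \<in> carrier_mat a b" "B \<in> carrier_mat b c" "i < a" "j < c"
  shows "(A * B) $$ (i, j) = (\<Sum>l<b. A $$ (i, l) * B $$ (l, j))"
  using assms by (simp add: scalar_prod_eq_sum[of _ b])

lemma mult_mat_vec_entries:
  assumes "A \<in> carrier_mat n n" "i < n"
  shows "(A *\<^sub>v vec n x) $ i = mat_vec n (entries A) x i"
  using assms unfolding mat_vec_def entries_def by (simp add: scalar_prod_eq_sum[of _ n])

lemma scalar_prod_mult_mat_vec:
  fixes A :: "real mat"
  assumes "A \<in> carrier_mat n n" "y \<in> carrier_vec n"
  shows "y \<bullet> (A *\<^sub>v y) = quad_form n (entries A) (\<lambda>i. y $ i)"
proof -
  have "y \<bullet> (A *\<^sub>v y) = (\<Sum>i<n. y $ i * (\<Sum>j<n. A $$ (i, j) * y $ j))"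
    using assms by (simp add: scalar_prod_eq_sum[of _ n])
  then show ?thesis
    unfolding quad_form_def entries_def by (simp add: sum_distrib_left mult.assoc)
qed

lemma scalar_prod_mult_mat_vec_blocks:
  fixes A :: "real mat"
  assumes "A \<in> carrier_mat (N * M) (N * M)" "y \<in> carrier_vec (N * M)"
  shows "y \<bullet> (A *\<^sub>v y) = (\<Sum>n<N. \<Sum>m<M. \<Sum>n'<N. \<Sum>m'<M.
           y $ (n * M + m) * A $$ (n * M + m, n' * M + m') * y $ (n' * M + m'))"
  unfolding scalar_prod_mult_mat_vec[OF assms] quad_form_def entries_def sum_lessThan_mult ..

lemma kron_carrier:
  "A \<in> carrier_mat a a' \<Longrightarrow> B \<in> carrier_mat b b' \<Longrightarrow> kron A B \<in> carrier_mat (a * b) (a' * b')"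
  unfolding kron_def by auto

lemma kron_index:
  assumes "A \<in> carrier_mat a a'" "B \<in> carrier_mat b b'" "i < a" "j < a'" "k < b" "l < b'"
  shows "kron A B $$ (i * b + k, j * b' + l) = A $$ (i, j) * B $$ (k, l)"
  using assms index_lt_mult[of i a k b] index_lt_mult[of j a' l b'] unfolding kron_def by simp

lemma diag_block_mat_carrier:
  "(\<And>A. A \<in> set As \<Longrightarrow> A \<in> carrier_mat M M)
     \<Longrightarrow> diag_block_mat As \<in> carrier_mat (length As * M) (length As * M)"
  by (induction As) (auto simp: Let_def)

lemma diag_block_mat_index:
  assumes "\<And>A. A \<in> set As \<Longrightarrow> A \<in> carrier_mat M M"
    and "n < length As" "n' < length As" "m < M" "m' < M"
  shows "diag_block_mat As $$ (n * M + m, n' * M + m') = (if n = n' then (As ! n) $$ (m, m') else 0)"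
  using assms
proof (induction As arbitrary: n n')
  case Nil
  then show ?case by simp
next
  case (Cons A As)
  have A: "A \<in> carrier_mat M M" and B: "diag_block_mat As \<in> carrier_mat (length As * M) (length As * M)"
    using Cons.prems(1) diag_block_mat_carrier[of As M] by auto
  have lt: "n * M + m < M + length As * M" "n' * M + m' < M + length As * M"
    using index_lt_mult[OF Cons.prems(2,4)] index_lt_mult[OF Cons.prems(3,5)] by simp_all
  have "diag_block_mat (A # As) $$ (n * M + m, n' * M + m')
      = (if n * M + m < M then if n' * M + m' < M then A $$ (n * M + m, n' * M + m') else 0
         else if n' * M + m' < M then 0 else diag_block_mat As $$ (n * M + m - M, n' * M + m' - M))"
    using A B lt by (simp add: Let_def)
  then show ?case
    using Cons.IH[OF _ _ _ Cons.prems(4,5)] Cons.prems by (cases n; cases n') auto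
qed

lemma kron_one_mult_diag_block_index:
  assumes K: "K \<in> carrier_mat M M" and P: "\<And>n. n < N \<Longrightarrow> P n \<in> carrier_mat M M"
    and nm: "n < N" "n' < N" "m < M" "m' < M"
  shows "(kron (1\<^sub>m N) K * diag_block_mat (map P [0..<N])) $$ (n * M + m, n' * M + m')
       = (if n = n' then mat_prod M (entries K) (entries (P n)) m m' else 0)"
proof -
  have PS: "A \<in> carrier_mat M M" if "A \<in> set (map P [0..<N])" for A using that P by auto
  have "diag_block_mat (map P [0..<N])
      \<in> carrier_mat (length (map P [0..<N]) * M) (length (map P [0..<N]) * M)"
    by (rule diag_block_mat_carrier) (rule PS)
  then have D: "diag_block_mat (map P [0..<N]) \<in> carrier_mat (N * M) (N * M)" by simp
  have Dind: "diag_block_mat (map P [0..<N]) $$ (k * M + l, n' * M + m')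
      = (if k = n' then P k $$ (l, m') else 0)" if "k < N" "l < M" for k l
    using diag_block_mat_index[of "map P [0..<N]" M k n' l m'] PS that nm by simp
  have "(kron (1\<^sub>m N) K * diag_block_mat (map P [0..<N])) $$ (n * M + m, n' * M + m')
      = (\<Sum>k<N. \<Sum>l<M. kron (1\<^sub>m N) K $$ (n * M + m, k * M + l)
                       * diag_block_mat (map P [0..<N]) $$ (k * M + l, n' * M + m'))"
    using kron_carrier[OF one_carrier_mat K] D nm index_lt_mult
    by (simp add: index_mult_mat_sum[of _ "N * M" "N * M"] sum_lessThan_mult)
  also have "\<dots> = (\<Sum>k<N. if k = n then (\<Sum>l<M. K $$ (m, l) * (if n = n' then P n $$ (l, m') else 0)) else 0)"
    using nm by (intro sum.cong refl) (auto simp: kron_index[OF one_carrier_mat K] Dind)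
  also have "\<dots> = (if n = n' then mat_prod M (entries K) (entries (P n)) m m' else 0)"
    using nm by (simp add: mat_prod_def entries_def)
  finally show ?thesis .
qed

lemma sum_blocks_kron_right_identity:
  fixes Y :: "nat \<Rightarrow> nat \<Rightarrow> real"
  shows "(\<Sum>n<N. \<Sum>m<M. \<Sum>n'<N. \<Sum>m'<M. Y n m * (L n n' * (if m = m' then 1 else 0)) * Y n' m')
       = (\<Sum>m<M. quad_form N L (\<lambda>n. Y n m))"
proof -
  have "(\<Sum>n<N. \<Sum>m<M. \<Sum>n'<N. \<Sum>m'<M. Y n m * (L n n' * (if m = m' then 1 else 0)) * Y n' m')
      = (\<Sum>n<N. \<Sum>m<M. \<Sum>n'<N. Y n m * L n n' * Y n' m)"
    by (intro sum.cong refl) (simp add: if_distrib[of "\<lambda>x. _ * (_ * x) * _"] sum.delta cong: if_cong)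
  also have "\<dots> = (\<Sum>m<M. quad_form N L (\<lambda>n. Y n m))"
    unfolding quad_form_def by (rule sum.swap)
  finally show ?thesis .
qed

lemma sum_blocks_diagonal:
  fixes Y :: "nat \<Rightarrow> nat \<Rightarrow> real"
  shows "(\<Sum>n<N. \<Sum>m<M. \<Sum>n'<N. \<Sum>m'<M. Y n m * (if n = n' then A n m m' else 0) * Y n' m')
       = (\<Sum>n<N. quad_form M (A n) (Y n))"
proof -
  have "(\<Sum>n<N. \<Sum>m<M. \<Sum>n'<N. \<Sum>m'<M. Y n m * (if n = n' then A n m m' else 0) * Y n' m')
      = (\<Sum>n<N. \<Sum>n'<N. if n = n' then (\<Sum>m<M. \<Sum>m'<M. Y n m * A n m m' * Y n' m') else 0)"
  proof (rule sum.cong[OF refl])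
    fix n
    have "(\<Sum>m<M. \<Sum>n'<N. \<Sum>m'<M. Y n m * (if n = n' then A n m m' else 0) * Y n' m')
        = (\<Sum>n'<N. \<Sum>m<M. \<Sum>m'<M. Y n m * (if n = n' then A n m m' else 0) * Y n' m')"
      by (rule sum.swap)
    also have "\<dots> = (\<Sum>n'<N. if n = n' then (\<Sum>m<M. \<Sum>m'<M. Y n m * A n m m' * Y n' m') else 0)"
      by (intro sum.cong refl) auto
    finally show "(\<Sum>m<M. \<Sum>n'<N. \<Sum>m'<M. Y n m * (if n = n' then A n m m' else 0) * Y n' m')
        = (\<Sum>n'<N. if n = n' then (\<Sum>m<M. \<Sum>m'<M. Y n m * A n m m' * Y n' m') else 0)" .
  qed
  also have "\<dots> = (\<Sum>n<N. quad_form M (A n) (Y n))"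
    unfolding quad_form_def by (simp add: sum.delta)
  finally show ?thesis .
qed

lemma scalar_prod_self_blocks:
  fixes y :: "real vec"
  assumes "y \<in> carrier_vec (N * M)"
  shows "y \<bullet> y = (\<Sum>n<N. norm_sq M (\<lambda>m. y $ (n * M + m)))"
  using assms unfolding norm_sq_def
  by (simp add: scalar_prod_eq_sum[of _ "N * M"] sum_lessThan_mult power2_eq_square)

lemma scalar_prod_consensus_matrix:
  fixes L K :: "real mat"
  assumes L: "L \<in> carrier_mat N N" and K: "K \<in> carrier_mat M M"
    and P: "\<And>n. n < N \<Longrightarrow> P n \<in> carrier_mat M M" and y: "y \<in> carrier_vec (N * M)"
  shows "y \<bullet> ((\<beta> \<cdot>\<^sub>m kron L (1\<^sub>m M) + \<alpha> \<cdot>\<^sub>m (kron (1\<^sub>m N) K * diag_block_mat (map P [0..<N]))) *\<^sub>v y)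
       = \<beta> * (\<Sum>m<M. quad_form N (entries L) (\<lambda>n. y $ (n * M + m)))
         + \<alpha> * (\<Sum>n<N. quad_form M (mat_prod M (entries K) (entries (P n))) (\<lambda>m. y $ (n * M + m)))"
proof -
  define KP where "KP n = mat_prod M (entries K) (entries (P n))" for n
  define Y where "Y n m = y $ (n * M + m)" for n m
  define A where "A = \<beta> \<cdot>\<^sub>m kron L (1\<^sub>m M) + \<alpha> \<cdot>\<^sub>m (kron (1\<^sub>m N) K * diag_block_mat (map P [0..<N]))"
  have PS: "B \<in> carrier_mat M M" if "B \<in> set (map P [0..<N])" for B using that P by auto
  have "diag_block_mat (map P [0..<N])
      \<in> carrier_mat (length (map P [0..<N]) * M) (length (map P [0..<N]) * M)"
    by (rule diag_block_mat_carrier) (rule PS)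
  moreover have "kron L (1\<^sub>m M) \<in> carrier_mat (N * M) (N * M)"
    using kron_carrier[OF L one_carrier_mat[of M]] by simp
  moreover have "kron (1\<^sub>m N) K \<in> carrier_mat (N * M) (N * M)"
    using kron_carrier[OF one_carrier_mat[of N] K] by simp
  ultimately have blocks: "diag_block_mat (map P [0..<N]) \<in> carrier_mat (N * M) (N * M)"
    "kron L (1\<^sub>m M) \<in> carrier_mat (N * M) (N * M)" "kron (1\<^sub>m N) K \<in> carrier_mat (N * M) (N * M)"
    by simp_all
  then have A: "A \<in> carrier_mat (N * M) (N * M)" unfolding A_def by auto
  have "A $$ (n * M + m, n' * M + m')
      = \<beta> * (entries L n n' * (if m = m' then 1 else 0)) + \<alpha> * (if n = n' then KP n m m' else 0)"
    if "n < N" "n' < N" "m < M" "m' < M" for n n' m m'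
    using that blocks index_lt_mult[of n N m M] index_lt_mult[of n' N m' M]
    unfolding A_def KP_def
    by (simp add: kron_index[OF L one_carrier_mat] kron_one_mult_diag_block_index[OF K P]
        entries_def del: index_mult_mat(1))
  then have "y \<bullet> (A *\<^sub>v y) = (\<Sum>n<N. \<Sum>m<M. \<Sum>n'<N. \<Sum>m'<M.
        \<beta> * (Y n m * (entries L n n' * (if m = m' then 1 else 0)) * Y n' m')
        + \<alpha> * (Y n m * (if n = n' then KP n m m' else 0) * Y n' m'))"
    unfolding scalar_prod_mult_mat_vec_blocks[OF A y] Y_def
    by (intro sum.cong refl) (simp add: algebra_simps)
  also have "\<dots> = \<beta> * (\<Sum>m<M. quad_form N (entries L) (\<lambda>n. Y n m))
      + \<alpha> * (\<Sum>n<N. quad_form M (KP n) (Y n))"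
    unfolding sum_blocks_kron_right_identity[symmetric] sum_blocks_diagonal[symmetric]
    by (simp add: sum.distrib sum_distrib_left)
  finally show ?thesis unfolding A_def KP_def Y_def .
qed

section \<open>Positive definite weights and Gram matrices\<close>

lemma symmetric_fun_entries:
  assumes "A \<in> carrier_mat n n" "symmetric_mat A"
  shows "symmetric_fun n (entries A)"
  unfolding symmetric_fun_def entries_def
proof (intro allI impI)
  fix i j assume "i < n" "j < n"
  then have "transpose_mat A $$ (i, j) = A $$ (j, i)" using assms(1) by simp
  then show "A $$ (i, j) = A $$ (j, i)" using assms(2) unfolding symmetric_mat_def by simp
qed

lemma vec_neq_zero: "\<exists>i<n. x i \<noteq> 0 \<Longrightarrow> vec n x \<noteq> 0\<^sub>v n"
  by (metis index_vec index_zero_vec(1))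

lemma quad_form_vec:
  fixes A :: "real mat"
  assumes "A \<in> carrier_mat n n"
  shows "quad_form n (entries A) x = vec n x \<bullet> (A *\<^sub>v vec n x)"
  unfolding scalar_prod_mult_mat_vec[OF assms vec_carrier] by (rule quad_form_cong) simp

lemma pos_def_mat_coercive:
  assumes "pos_def_mat n K"
  shows "\<exists>k>0. \<forall>x. quad_form n (entries K) x \<ge> k * norm_sq n x"
proof (rule coercive_of_pos_def)
  have K: "K \<in> carrier_mat n n" "symmetric_mat K"
    and pos: "\<And>x. x \<in> carrier_vec n \<Longrightarrow> x \<noteq> 0\<^sub>v n \<Longrightarrow> x \<bullet> (K *\<^sub>v x) > 0"
    using assms unfolding pos_def_mat_def by auto
  show "symmetric_fun n (entries K)" by (rule symmetric_fun_entries[OF K])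
  show "quad_form n (entries K) x > 0" if "\<exists>i<n. x i \<noteq> 0" for x
    unfolding quad_form_vec[OF K(1)] using pos[OF vec_carrier vec_neq_zero[OF that]] .
qed

lemma invertible_mat_mult_vec_eq_0:
  fixes A :: "'a :: comm_ring_1 mat"
  assumes inv: "invertible_mat A" and A: "A \<in> carrier_mat n n"
    and v: "v \<in> carrier_vec n" and Av: "A *\<^sub>v v = 0\<^sub>v n"
  shows "v = 0\<^sub>v n"
proof -
  obtain B where "inverts_mat A B" "inverts_mat B A"
    using inv unfolding invertible_mat_def by blast
  then have AB: "A * B = 1\<^sub>m n" and BA: "B * A = 1\<^sub>m (dim_row B)"
    using A unfolding inverts_mat_def by auto
  have "dim_col B = n" using arg_cong[OF AB, of dim_col] by simp
  moreover have "dim_row B = n" using arg_cong[OF BA, of dim_col] A by simp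
  ultimately have B: "B \<in> carrier_mat n n" by auto
  have "v = (B * A) *\<^sub>v v" using BA B v by simp
  also have "\<dots> = B *\<^sub>v (A *\<^sub>v v)" using B A v by (rule assoc_mult_mat_vec)
  also have "\<dots> = 0\<^sub>v n" unfolding Av using B by (intro eq_vecI) auto
  finally show ?thesis .
qed

lemma gram_sum_carrier_index:
  assumes "\<And>n. n < N \<Longrightarrow> H n \<in> carrier_mat (Mr n) M"
  shows "gram_sum N M H \<in> carrier_mat M M"
    and "\<And>i j. i < M \<Longrightarrow> j < M
           \<Longrightarrow> gram_sum N M H $$ (i, j) = (\<Sum>n<N. (transpose_mat (H n) * H n) $$ (i, j))"
proof -
  have "foldr (\<lambda>n S. transpose_mat (H n) * H n + S) ns (0\<^sub>m M M) \<in> carrier_mat M M \<and>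
      (\<forall>i<M. \<forall>j<M. foldr (\<lambda>n S. transpose_mat (H n) * H n + S) ns (0\<^sub>m M M) $$ (i, j)
         = (\<Sum>n\<leftarrow>ns. (transpose_mat (H n) * H n) $$ (i, j)))"
    if "set ns \<subseteq> {..<N}" for ns
    using that by (induction ns) (use assms in auto)
  from this[of "[0..<N]"] show "gram_sum N M H \<in> carrier_mat M M"
    and "\<And>i j. i < M \<Longrightarrow> j < M
           \<Longrightarrow> gram_sum N M H $$ (i, j) = (\<Sum>n<N. (transpose_mat (H n) * H n) $$ (i, j))"
    unfolding gram_sum_def by (auto simp: sum_set_upt_conv_sum_list_nat[symmetric] atLeast0LessThan)
qed

lemma index_transpose_mult_self:
  assumes "H \<in> carrier_mat r M" "i < M" "j < M"
  shows "(transpose_mat H * H) $$ (i, j) = (\<Sum>k<r. H $$ (k, i) * H $$ (k, j))"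
  using index_mult_mat_sum[of "transpose_mat H" M r H M i j] assms by simp

lemma quad_form_transpose_mult_self:
  fixes H :: "real mat"
  assumes "H \<in> carrier_mat r M"
  shows "quad_form M (entries (transpose_mat H * H)) x = (\<Sum>k<r. (\<Sum>i<M. H $$ (k, i) * x i)\<^sup>2)"
proof -
  have "quad_form M (entries (transpose_mat H * H)) x
      = (\<Sum>i<M. \<Sum>j<M. \<Sum>k<r. (H $$ (k, i) * x i) * (H $$ (k, j) * x j))"
    unfolding quad_form_def entries_def using assms
    by (intro sum.cong refl)
       (simp add: index_transpose_mult_self sum_distrib_left sum_distrib_right algebra_simps
         del: index_mult_mat(1))
  also have "\<dots> = (\<Sum>i<M. \<Sum>k<r. \<Sum>j<M. (H $$ (k, i) * x i) * (H $$ (k, j) * x j))"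
    by (rule sum.cong[OF refl], rule sum.swap)
  also have "\<dots> = (\<Sum>k<r. \<Sum>i<M. \<Sum>j<M. (H $$ (k, i) * x i) * (H $$ (k, j) * x j))"
    by (rule sum.swap)
  also have "\<dots> = (\<Sum>k<r. (\<Sum>i<M. H $$ (k, i) * x i)\<^sup>2)"
    by (simp add: power2_eq_square sum_product)
  finally show ?thesis .
qed

lemma quad_form_sum:
  assumes "\<And>i j. i < M \<Longrightarrow> j < M \<Longrightarrow> A i j = (\<Sum>n<N. B n i j)"
  shows "quad_form M A x = (\<Sum>n<N. quad_form M (B n) x)"
proof -
  have "quad_form M A x = (\<Sum>i<M. \<Sum>j<M. \<Sum>n<N. x i * B n i j * x j)"
    unfolding quad_form_def by (intro sum.cong refl) (simp add: assms sum_distrib_left sum_distrib_right)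
  also have "\<dots> = (\<Sum>i<M. \<Sum>n<N. \<Sum>j<M. x i * B n i j * x j)"
    by (rule sum.cong[OF refl], rule sum.swap)
  also have "\<dots> = (\<Sum>n<N. quad_form M (B n) x)" unfolding quad_form_def by (rule sum.swap)
  finally show ?thesis .
qed

lemma symmetric_fun_gram_sum:
  assumes H: "\<And>n. n < N \<Longrightarrow> H n \<in> carrier_mat (Mr n) M"
  shows "symmetric_fun M (entries (gram_sum N M H))"
  unfolding symmetric_fun_def entries_def
proof (intro allI impI)
  fix i j assume ij: "i < M" "j < M"
  have "gram_sum N M H $$ (i, j) = (\<Sum>n<N. (transpose_mat (H n) * H n) $$ (i, j))"
    "gram_sum N M H $$ (j, i) = (\<Sum>n<N. (transpose_mat (H n) * H n) $$ (j, i))"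
    by (rule gram_sum_carrier_index(2); use H ij in auto)+
  moreover have "(transpose_mat (H n) * H n) $$ (i, j) = (transpose_mat (H n) * H n) $$ (j, i)"
    if "n < N" for n
    using index_transpose_mult_self[OF H[OF that] ij] index_transpose_mult_self[OF H[OF that] ij(2,1)]
    by (simp add: mult.commute del: index_mult_mat(1))
  ultimately show "gram_sum N M H $$ (i, j) = gram_sum N M H $$ (j, i)" by simp
qed

lemma gram_sum_coercive:
  assumes H: "\<And>n. n < N \<Longrightarrow> H n \<in> carrier_mat (Mr n) M"
    and inv: "invertible_mat (gram_sum N M H)"
  shows "\<exists>g>0. \<forall>x. quad_form M (entries (gram_sum N M H)) x \<ge> g * norm_sq M x"
proof (rule coercive_of_pos_def)
  define G where "G = gram_sum N M H"
  have G: "G \<in> carrier_mat M M"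
    "\<And>i j. i < M \<Longrightarrow> j < M \<Longrightarrow> G $$ (i, j) = (\<Sum>n<N. (transpose_mat (H n) * H n) $$ (i, j))"
    unfolding G_def by (rule gram_sum_carrier_index; use H in auto)+
  show sym: "symmetric_fun M (entries G)"
    unfolding G_def by (rule symmetric_fun_gram_sum) (rule H)
  have "quad_form M (entries G) x = (\<Sum>n<N. quad_form M (entries (transpose_mat (H n) * H n)) x)"
    for x by (rule quad_form_sum) (simp add: G(2) entries_def)
  moreover have "quad_form M (entries (transpose_mat (H n) * H n)) x \<ge> 0" if "n < N" for n x
    using H[OF that] by (simp add: quad_form_transpose_mult_self sum_nonneg)
  ultimately have psd: "quad_form M (entries G) x \<ge> 0" for x by (auto intro!: sum_nonneg)
  show "quad_form M (entries G) x > 0" if "\<exists>i<M. x i \<noteq> 0" for x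
  proof (rule ccontr)
    assume "\<not> quad_form M (entries G) x > 0"
    then have "quad_form M (entries G) x = 0" using psd[of x] by simp
    then have "(G *\<^sub>v vec M x) $ i = 0" if "i < M" for i
      using mult_mat_vec_entries[OF G(1) that, of x] mat_vec_eq_0_of_psd[OF sym psd _ that] by simp
    then have "G *\<^sub>v vec M x = 0\<^sub>v M" using G(1) by (intro eq_vecI) auto
    then have "vec M x = 0\<^sub>v M" using invertible_mat_mult_vec_eq_0[OF inv[folded G_def] G(1)] by simp
    with vec_neq_zero[OF that] show False by contradiction
  qed
qed

lemma local_forms_coercive:
  assumes H: "\<And>n. n < N \<Longrightarrow> H n \<in> carrier_mat (Mr n) M"
    and inv: "invertible_mat (gram_sum N M H)" and K: "pos_def_mat M K"
    and comm: "K * gram_sum N M H = gram_sum N M H * K"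
  shows "\<exists>\<kappa>>0. \<forall>v. (\<Sum>n<N. quad_form M (mat_prod M (entries K) (entries (transpose_mat (H n) * H n))) v)
           \<ge> \<kappa> * norm_sq M v"
proof -
  define G where "G = gram_sum N M H"
  have G: "G \<in> carrier_mat M M"
    "\<And>i j. i < M \<Longrightarrow> j < M \<Longrightarrow> G $$ (i, j) = (\<Sum>n<N. (transpose_mat (H n) * H n) $$ (i, j))"
    unfolding G_def by (rule gram_sum_carrier_index; use H in auto)+
  have Kc: "K \<in> carrier_mat M M" and symK: "symmetric_fun M (entries K)"
    using K symmetric_fun_entries unfolding pos_def_mat_def by auto
  obtain k where k: "k > 0" "\<And>x. quad_form M (entries K) x \<ge> k * norm_sq M x"
    using pos_def_mat_coercive[OF K] by blast
  obtain g where g: "g > 0" "\<And>x. quad_form M (entries G) x \<ge> g * norm_sq M x"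
    using gram_sum_coercive[of N H Mr M] H inv unfolding G_def by blast
  have symG: "symmetric_fun M (entries G)"
    unfolding G_def by (rule symmetric_fun_gram_sum) (rule H)
  have mat_prod_entries: "mat_prod M (entries A) (entries B) i j = (A * B) $$ (i, j)"
    if "A \<in> carrier_mat M M" "B \<in> carrier_mat M M" "i < M" "j < M" for A B i j
    using index_mult_mat_sum[OF that] unfolding mat_prod_def entries_def by simp
  have "mat_prod M (entries K) (entries G) i j = mat_prod M (entries G) (entries K) i j"
    if "i < M" "j < M" for i j
    using that Kc G(1) comm by (simp add: mat_prod_entries G_def)
  from coercive_mat_prod_of_commute[OF symK symG this k g]
  obtain \<kappa> where "\<kappa> > 0" "\<And>v. quad_form M (mat_prod M (entries K) (entries G)) v \<ge> \<kappa> * norm_sq M v"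
    by blast
  moreover have "quad_form M (mat_prod M (entries K) (entries G)) v
      = (\<Sum>n<N. quad_form M (mat_prod M (entries K) (entries (transpose_mat (H n) * H n))) v)" for v
    by (rule quad_form_sum)
       (simp add: mat_prod_def G(2) entries_def sum_distrib_left flip: sum.swap[of _ "{..<N}"])
  ultimately show ?thesis by auto
qed

section \<open>Algebraic connectivity\<close>

lemma sorted_nth_1_le_of_count:
  fixes xs :: "real list"
  assumes "sorted xs" "count (mset xs) v \<ge> 2"
  shows "xs ! 1 \<le> v"
proof (cases xs)
  case Nil
  then show ?thesis using assms by simp
next
  case (Cons a ys)
  show ?thesis
  proof (cases ys)
    case Nil
    then show ?thesis using assms Cons by (auto split: if_splits)
  next
    case (Cons b zs)
    show ?thesis
    proof (rule ccontr)
      assume "\<not> xs ! 1 \<le> v"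
      then have "v < b" using \<open>xs = a # ys\<close> Cons by simp
      moreover have "\<forall>z\<in>set zs. b \<le> z" using assms(1) \<open>xs = a # ys\<close> Cons by simp
      ultimately have "count (mset zs) v = 0" by force
      then have "count (mset xs) v \<le> 1"
        using \<open>xs = a # ys\<close> Cons \<open>v < b\<close> by (simp del: count_mset_0_iff)
      then show False using assms(2) by simp
    qed
  qed
qed

lemma sum_insert_index:
  fixes f :: "nat \<Rightarrow> 'a :: comm_monoid_add"
  assumes i: "i < N"
  shows "(\<Sum>b<N - 1. f (insert_index i b)) = (\<Sum>c\<in>{..<N} - {i}. f c)"
proof (rule sum.reindex_bij_witness[of _ "delete_index i" "insert_index i"])
  fix c assume c: "c \<in> {..<N} - {i}"
  then show "insert_index i (delete_index i c) = c" by (simp add: insert_delete_index)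
  show "delete_index i c \<in> {..<N - 1}" using c i by (auto simp: delete_index_def)
next
  fix b assume b: "b \<in> {..<N - 1}"
  then show "delete_index i (insert_index i b) = b" by simp
  show "insert_index i b \<in> {..<N} - {i}" using b i by (auto simp: insert_index_def)
qed simp

lemma eigenvalue_0_of_row_sums_zero:
  fixes L :: "real mat"
  assumes L: "L \<in> carrier_mat N N" and N: "N > 0"
    and rows: "\<And>i. i < N \<Longrightarrow> (\<Sum>j<N. L $$ (i, j)) = 0"
  shows "eigenvalue L 0"
  unfolding eigenvalue_def eigenvector_def
proof (intro exI[of _ "vec N (\<lambda>_. 1 :: real)"] conjI)
  show "vec N (\<lambda>_. 1 :: real) \<in> carrier_vec (dim_row L)" using L by simp
  have "\<exists>i<N. (1 :: real) \<noteq> 0" using N by (intro exI[of _ 0]) simp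
  then show "vec N (\<lambda>_. 1 :: real) \<noteq> 0\<^sub>v (dim_row L)" using L vec_neq_zero[of N "\<lambda>_. 1 :: real"] by simp
  show "L *\<^sub>v vec N (\<lambda>_. 1 :: real) = 0 \<cdot>\<^sub>v vec N (\<lambda>_. 1)"
    using L rows by (intro eq_vecI) (auto simp: scalar_prod_eq_sum[of _ N])
qed

lemma eigenvalue_0_mat_delete_of_kernel:
  fixes L :: "real mat"
  assumes L: "L \<in> carrier_mat N N" and i: "i < N"
    and ker: "\<And>r. r < N \<Longrightarrow> (\<Sum>j<N. L $$ (r, j) * u j) = 0"
    and ui: "u i = 0" and nz: "\<exists>j<N. u j \<noteq> 0"
  shows "eigenvalue (mat_delete L i i) 0"
  unfolding eigenvalue_def eigenvector_def
proof (intro exI[of _ "vec (N - 1) (\<lambda>b. u (insert_index i b))"] conjI)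
  define v where "v = vec (N - 1) (\<lambda>b. u (insert_index i b))"
  have LD: "mat_delete L i i \<in> carrier_mat (N - 1) (N - 1)" using mat_delete_carrier[OF L] L by auto
  show "v \<in> carrier_vec (dim_row (mat_delete L i i))" unfolding v_def using carrier_matD(1)[OF LD] by simp
  obtain j where j: "j < N" "u j \<noteq> 0" using nz by blast
  then have "j \<noteq> i" using ui by auto
  then have "delete_index i j < N - 1" "insert_index i (delete_index i j) = j"
    using j i by (auto simp: delete_index_def insert_delete_index)
  then have "\<exists>b<N - 1. u (insert_index i b) \<noteq> 0" using j by metis
  then show "v \<noteq> 0\<^sub>v (dim_row (mat_delete L i i))"
    unfolding v_def carrier_matD(1)[OF LD] by (rule vec_neq_zero)
  have "(mat_delete L i i *\<^sub>v v) $ a = 0" if a: "a < N - 1" for a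
  proof -
    have "(mat_delete L i i *\<^sub>v v) $ a
        = (\<Sum>b<N - 1. L $$ (insert_index i a, insert_index i b) * u (insert_index i b))"
      using LD a L i
      by (simp add: scalar_prod_eq_sum[of _ "N - 1"] v_def mat_delete_def insert_index_def)
    also have "\<dots> = (\<Sum>c\<in>{..<N} - {i}. L $$ (insert_index i a, c) * u c)"
      by (rule sum_insert_index[OF i])
    also have "\<dots> = (\<Sum>c<N. L $$ (insert_index i a, c) * u c)"
      using i ui by (subst sum_diff1) auto
    also have "\<dots> = 0" using a i by (intro ker) (auto simp: insert_index_def)
    finally show ?thesis .
  qed
  then show "mat_delete L i i *\<^sub>v v = 0 \<cdot>\<^sub>v v" using LD by (intro eq_vecI) (auto simp: v_def)
qed

text \<open>The derivative of the characteristic polynomial is the sum of the characteristic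
  polynomials of the principal minors, so \<open>0\<close> is at least a double root as soon as it is a
  root of all of them.\<close>

lemma count_proots_char_poly_ge_2:
  fixes L :: "real mat"
  assumes L: "L \<in> carrier_mat N N" and N: "N > 0" and ev: "eigenvalue L 0"
    and ev_del: "\<And>i. i < N \<Longrightarrow> eigenvalue (mat_delete L i i) 0"
  shows "count (proots (char_poly L)) 0 \<ge> 2"
proof -
  let ?p = "char_poly L"
  have deg: "degree ?p = N" "coeff ?p N = 1" using degree_monic_char_poly[OF L] by auto
  then have p: "?p \<noteq> 0" "pderiv ?p \<noteq> 0" using N by (auto simp: pderiv_eq_0_iff)
  have "poly ?p 0 = 0" using eigenvalue_root_char_poly[OF L] ev by simp
  moreover have "poly (pderiv ?p) 0 = 0"
    unfolding pderiv_char_poly[OF L]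
    using ev_del eigenvalue_root_char_poly[OF mat_delete_carrier[OF L]] by (simp add: poly_sum)
  then have "order 0 (pderiv ?p) \<noteq> 0" using p order_root by blast
  ultimately have "order 0 ?p \<ge> 2" using order_pderiv[OF p(1)] by simp
  then show ?thesis using p by simp
qed

lemma lambda2_nonpos_of_kernel:
  fixes L :: "real mat"
  assumes L: "L \<in> carrier_mat N N" and N: "N > 0"
    and rows: "\<And>i. i < N \<Longrightarrow> (\<Sum>j<N. L $$ (i, j)) = 0"
    and ker: "\<And>i. i < N \<Longrightarrow> (\<Sum>j<N. L $$ (i, j) * w j) = 0"
    and mean: "(\<Sum>i<N. w i) = 0" and nz: "\<exists>i<N. w i \<noteq> 0"
  shows "lambda2 L \<le> 0"
proof -
  have "eigenvalue (mat_delete L i i) 0" if i: "i < N" for i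
  proof (rule eigenvalue_0_mat_delete_of_kernel[OF L i])
    show "(\<Sum>j<N. L $$ (r, j) * (w j - w i)) = 0" if "r < N" for r
      using ker[OF that] rows[OF that]
      by (simp add: algebra_simps sum_subtractf sum_distrib_left[symmetric])
    show "\<exists>j<N. w j - w i \<noteq> 0"
    proof (rule ccontr)
      assume "\<not> (\<exists>j<N. w j - w i \<noteq> 0)"
      then have "(\<Sum>j<N. w j) = N * w i" by simp
      then show False using mean N nz \<open>\<not> _\<close> by auto
    qed
  qed simp
  then have "count (proots (char_poly L)) 0 \<ge> 2"
    using count_proots_char_poly_ge_2[OF L N eigenvalue_0_of_row_sums_zero[OF L N rows]] by blast
  then show ?thesis
    unfolding lambda2_def eigvals_sorted_def by (intro sorted_nth_1_le_of_count) simp_all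
qed

lemma graph_laplacian_coercive:
  assumes N: "N \<ge> 2" and lap: "graph_laplacian N L" and conn: "lambda2 L > 0"
  shows "\<exists>c>0. \<forall>w. (\<Sum>i<N. w i) = 0 \<longrightarrow> quad_form N (entries L) w \<ge> c * norm_sq N w"
proof -
  have L: "L \<in> carrier_mat N N" "symmetric_mat L"
    and off: "\<And>i j. i < N \<Longrightarrow> j < N \<Longrightarrow> i \<noteq> j \<Longrightarrow> L $$ (i, j) \<le> 0"
    and rows: "\<And>i. i < N \<Longrightarrow> (\<Sum>j<N. L $$ (i, j)) = 0"
    using lap unfolding graph_laplacian_def by auto
  show ?thesis
  proof (rule laplacian_coercive_of_kernel)
    show "symmetric_fun N (entries L)" by (rule symmetric_fun_entries[OF L])
    show "entries L i j \<le> 0" if "i < N" "j < N" "i \<noteq> j" for i j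
      using off[OF that] by (simp add: entries_def)
    show "(\<Sum>j<N. entries L i j) = 0" if "i < N" for i using rows[OF that] by (simp add: entries_def)
    show "\<forall>i<N. w i = 0" if "\<forall>i<N. mat_vec N (entries L) w i = 0" "(\<Sum>i<N. w i) = 0" for w
    proof (rule ccontr)
      assume "\<not> (\<forall>i<N. w i = 0)"
      then have "lambda2 L \<le> 0"
        using that N by (intro lambda2_nonpos_of_kernel[OF L(1) _ rows]) (auto simp: mat_vec_def entries_def)
      with conn show False by simp
    qed
  qed
qed

section \<open>The consensus and innovation matrix\<close>

lemma consensus_matrix_coercive:
  assumes N2: "N \<ge> 2" and lap: "graph_laplacian N L" and conn: "lambda2 L > 0"
    and H: "\<And>n. n < N \<Longrightarrow> H n \<in> carrier_mat (Mr n) M"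
    and inv: "invertible_mat (gram_sum N M H)" and Kpd: "pos_def_mat M K"
    and comm: "K * gram_sum N M H = gram_sum N M H * K"
  shows "\<exists>R c. c > 0 \<and> (\<forall>\<alpha> \<beta>. \<forall>y \<in> carrier_vec (N * M). \<alpha> > 0 \<longrightarrow> \<beta> \<ge> R * \<alpha> \<longrightarrow>
           c * \<alpha> * (y \<bullet> y) \<le> y \<bullet> ((\<beta> \<cdot>\<^sub>m kron L (1\<^sub>m M) + \<alpha> \<cdot>\<^sub>m (kron (1\<^sub>m N) K
             * diag_block_mat (map (\<lambda>n. transpose_mat (H n) * H n) [0..<N]))) *\<^sub>v y))"
proof -
  have N: "N > 0" using N2 by simp
  have L: "L \<in> carrier_mat N N" and symL: "symmetric_fun N (entries L)"
    and rows: "\<And>i. i < N \<Longrightarrow> (\<Sum>j<N. entries L i j) = 0"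
    using lap symmetric_fun_entries unfolding graph_laplacian_def entries_def by auto
  have K: "K \<in> carrier_mat M M" using Kpd unfolding pos_def_mat_def by simp
  have P: "transpose_mat (H n) * H n \<in> carrier_mat M M" if "n < N" for n
    using H[OF that] by simp
  obtain cL where cL: "cL > 0" "\<And>w. (\<Sum>i<N. w i) = 0 \<Longrightarrow> quad_form N (entries L) w \<ge> cL * norm_sq N w"
    using graph_laplacian_coercive[OF N2 lap conn] by blast
  obtain \<kappa> where \<kappa>: "\<kappa> > 0" "\<And>v. (\<Sum>n<N. quad_form M
      (mat_prod M (entries K) (entries (transpose_mat (H n) * H n))) v) \<ge> \<kappa> * norm_sq M v"
    using local_forms_coercive[of N H Mr M K] H inv Kpd comm by blast
  obtain R c where "c > 0" and coercive: "\<And>\<alpha> \<beta> Y. \<alpha> > 0 \<Longrightarrow> \<beta> \<ge> R * \<alpha> \<Longrightarrow>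
      c * \<alpha> * (\<Sum>n<N. norm_sq M (Y n)) \<le> \<beta> * (\<Sum>m<M. quad_form N (entries L) (\<lambda>n. Y n m))
        + \<alpha> * (\<Sum>n<N. quad_form M (mat_prod M (entries K) (entries (transpose_mat (H n) * H n))) (Y n))"
    using laplacian_plus_local_forms_coercive[OF N symL rows cL \<kappa>] by blast
  show ?thesis
  proof (rule exI[of _ R], rule exI[of _ c], intro conjI allI ballI impI)
    show "c > 0" by fact
    fix \<alpha> \<beta> and y :: "real vec"
    assume y: "y \<in> carrier_vec (N * M)" and "\<alpha> > 0" "\<beta> \<ge> R * \<alpha>"
    from coercive[OF this(2,3), of "\<lambda>n m. y $ (n * M + m)"]
    show "c * \<alpha> * (y \<bullet> y) \<le> y \<bullet> ((\<beta> \<cdot>\<^sub>m kron L (1\<^sub>m M) + \<alpha> \<cdot>\<^sub>m (kron (1\<^sub>m N) K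
        * diag_block_mat (map (\<lambda>n. transpose_mat (H n) * H n) [0..<N]))) *\<^sub>v y)"
      using scalar_prod_consensus_matrix[OF L K _ y, of "\<lambda>n. transpose_mat (H n) * H n"] P
      by (simp add: scalar_prod_self_blocks[OF y])
  qed
qed

lemma eventually_powr_ratio_ge:
  fixes a b R \<tau>1 \<tau>2 :: real
  assumes a: "a > 0" and b: "b > 0" and \<tau>: "\<tau>2 < \<tau>1"
  shows "\<exists>i1. \<forall>i\<ge>i1. R * (a / (real i + 1) powr \<tau>1) \<le> b / (real i + 1) powr \<tau>2"
proof -
  define d where "d = \<tau>1 - \<tau>2"
  define X where "X = \<bar>R\<bar> * a / b + 1"
  have d: "d > 0" unfolding d_def using \<tau> by simp
  have "R * a / b \<le> \<bar>R\<bar> * a / b" "0 \<le> \<bar>R\<bar> * a / b"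
    using a b by (auto intro: divide_right_mono mult_right_mono)
  then have X: "X > 0" "R * a / b \<le> X" unfolding X_def by linarith+
  show ?thesis
  proof (intro exI[of _ "nat \<lceil>X powr (1 / d)\<rceil>"] allI impI)
    fix i assume i: "i \<ge> nat \<lceil>X powr (1 / d)\<rceil>"
    define t where "t = real i + 1"
    have t: "t > 0" "X powr (1 / d) \<le> t" unfolding t_def using i by linarith+
    have "X = (X powr (1 / d)) powr d" using d X by (simp add: powr_powr)
    also have "\<dots> \<le> t powr d" using d t by (intro powr_mono2) auto
    finally have "X * b \<le> b * t powr d" using b by (simp add: mult.commute)
    moreover have "R * a \<le> X * b" using X(2) b by (simp add: field_simps)
    ultimately have "R * a \<le> b * t powr d" by linarith
    then have "R * a / t powr \<tau>1 \<le> b * t powr d / t powr \<tau>1"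
      using t by (intro divide_right_mono) auto
    also have "b * t powr d / t powr \<tau>1 = b / t powr \<tau>2"
      using t unfolding d_def by (simp add: powr_diff field_simps)
    finally show "R * (a / (real i + 1) powr \<tau>1) \<le> b / (real i + 1) powr \<tau>2"
      unfolding t_def by simp
  qed
qed

theorem lemma3:
  fixes N M :: nat and L K :: "real mat" and H :: "nat \<Rightarrow> real mat" and Mr :: "nat \<Rightarrow> nat"
    and a b \<tau>1 \<tau>2 \<gamma>0 \<epsilon>1 :: real and \<alpha> \<beta> :: "nat \<Rightarrow> real"
  assumes N2: "N \<ge> 2"
    and lap: "graph_laplacian N L"
    and conn: "lambda2 L > 0"
    and Hdim: "\<And>n. n < N \<Longrightarrow> H n \<in> carrier_mat (Mr n) M"
    and Ginv: "invertible_mat (gram_sum N M H)"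
    and Kpd: "pos_def_mat M K"
    and Kcomm: "K * (gram_sum N M H)
              = (gram_sum N M H) * K"
    and ab: "a > 0" "b > 0"
    and taus: "0 < \<tau>2" "\<tau>2 \<le> \<tau>1" "\<tau>1 \<le> 1"
    and gam: "0 \<le> \<gamma>0" "\<gamma>0 < 1/2" "\<epsilon>1 > 0"
    and tau1: "\<tau>1 > max (1/2 + \<gamma>0) (\<tau>2 + \<gamma>0 + 1 / (2 + \<epsilon>1))"
    and alpha: "\<And>i. \<alpha> i = a / (real i + 1) powr \<tau>1"
    and beta: "\<And>i. \<beta> i = b / (real i + 1) powr \<tau>2"
  shows "\<exists>i1 c4. c4 > 0 \<and> (\<forall>i\<ge>i1. \<forall>y \<in> carrier_vec (N * M).
           y \<bullet> ((\<beta> i \<cdot>\<^sub>m kron L (1\<^sub>m M)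
                  + \<alpha> i \<cdot>\<^sub>m (kron (1\<^sub>m N) K
                       * diag_block_mat (map (\<lambda>n. transpose_mat (H n) * H n) [0..<N]))) *\<^sub>v y)
           \<ge> c4 * \<alpha> i * (y \<bullet> y))"
proof -
  have "\<tau>2 + \<gamma>0 + 1 / (2 + \<epsilon>1) < \<tau>1" "1 / (2 + \<epsilon>1) > 0" using tau1 gam by simp_all
  then have "\<tau>2 < \<tau>1" using gam by linarith
  obtain R c4 where "c4 > 0" and coercive: "\<And>\<alpha> \<beta> y. y \<in> carrier_vec (N * M) \<Longrightarrow> \<alpha> > 0 \<Longrightarrow>
      \<beta> \<ge> R * \<alpha> \<Longrightarrow> c4 * \<alpha> * (y \<bullet> y) \<le> y \<bullet> ((\<beta> \<cdot>\<^sub>m kron L (1\<^sub>m M) + \<alpha> \<cdot>\<^sub>m (kron (1\<^sub>m N) K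
        * diag_block_mat (map (\<lambda>n. transpose_mat (H n) * H n) [0..<N]))) *\<^sub>v y)"
    using consensus_matrix_coercive[of N L H Mr M K] N2 lap conn Hdim Ginv Kpd Kcomm by blast
  obtain i1 where "\<And>i. i \<ge> i1 \<Longrightarrow> \<beta> i \<ge> R * \<alpha> i"
    using eventually_powr_ratio_ge[OF ab \<open>\<tau>2 < \<tau>1\<close>, of R] unfolding alpha beta by blast
  moreover have "\<alpha> i > 0" for i unfolding alpha using ab by simp
  ultimately show ?thesis using \<open>c4 > 0\<close> coercive by blast
qed

end
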